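(* Let $\Omega$, $s$, $c$ be as in the context. If $\bar\rho\in X$ satisfies condition (N), then there exists a unique $p^*\in\Sigma(\bar\rho)$ such that $p^*\le\tilde p$ on $\Omega$ for every $\tilde p\in\Sigma(\bar\rho)$; that is, $p^*$ is the smallest $c$-concave maximizer of the dual problem.
   Context: $\Omega\subset\mathbb{R}^d$ bounded smooth domain. $s:\mathbb{R}\times\Omega\to\mathbb{R}\cup\{+\infty\}$: (s1) $s(\cdot,x)$ proper, lsc, convex; (s2) $s(z,x)=+\infty$ for $z<0$, $s(0,x)=0$, $\inf s>-\infty$, $\lim_{z\to\infty}\inf_x s(z,x)/z=+\infty$. $s^*(p,x)=\sup_z(pz-s(z,x))$; $\partial s^*$ subdifferential in $p$. $E(\rho)=\int_\Omega s(\rho,x)dx$, $E^*(p)=\int_\Omega s^*(p,x)dx$, $X=\{\rho\in L^1(\Omega):E(\rho)<\infty\}$, $X^*=\{p:\Omega\to[-\infty,\infty]$ measurable$:E^*(p)<\infty\}$. Cost $c\ge0$ on $\mathbb{R}^d\times\mathbb{R}^d$, symmetric, $c(x,x)=0$, $C^1_{loc}$, $y\mapsto\nabla_xc(x_0,y)$ injective. $p^c(y)=\inf_{x\in\Omega}p(x)+c(x,y)$, $q^{\bar c}(x)=\sup_{y\in\Omega}q(y)-c(x,y)$; $c$-concave: $p^{c\bar c}=p$. $J^*(p,\bar\rho)=\int_\Omega\bar\rho\,p^cdx-E^*(p)$; $\Sigma(\bar\rho)=\operatorname{argmax}_{p\in X^*,p^{c\bar c}=p}J^*(p,\bar\rho)$.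 Condition (N): $0<\int_\Omega\bar\rho<\lim_{b\to\infty}\int_\Omega\sup\partial s^*(b,x)dx$. *)

theory Defs
  imports "HOL-Analysis.Analysis"
begin

fun Ck_on :: "nat \<Rightarrow> ('a::euclidean_space \<Rightarrow> real) \<Rightarrow> 'a set \<Rightarrow> bool" where
  "Ck_on 0 f S = continuous_on S f"
| "Ck_on (Suc k) f S =
     (\<exists>f'. (\<forall>x\<in>S. (f has_derivative f' x) (at x)) \<and> (\<forall>v. Ck_on k (\<lambda>x. f' x v) S))"

definition smooth_on :: "('a::euclidean_space \<Rightarrow> real) \<Rightarrow> 'a set \<Rightarrow> bool" where
  "smooth_on f S \<longleftrightarrow> (\<forall>k. Ck_on k f S)"

definition bounded_smooth_domain :: "'a::euclidean_space set \<Rightarrow> bool" where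
  "bounded_smooth_domain \<Omega> \<longleftrightarrow>
     open \<Omega> \<and> connected \<Omega> \<and> \<Omega> \<noteq> {} \<and> bounded \<Omega> \<and>
     (\<forall>x0\<in>frontier \<Omega>. \<exists>U \<phi>. open U \<and> x0 \<in> U \<and> smooth_on \<phi> U \<and>
        (\<forall>x\<in>U. \<exists>D. (\<phi> has_derivative D) (at x) \<and> D \<noteq> (\<lambda>h. 0)) \<and>
        \<Omega> \<inter> U = {x\<in>U. \<phi> x < 0})"

definition lsc_ereal :: "(real \<Rightarrow> ereal) \<Rightarrow> bool" where
  "lsc_ereal f \<longleftrightarrow> (\<forall>z. f z \<le> Liminf (at z) f)"

definition proper_ereal :: "(real \<Rightarrow> ereal) \<Rightarrow> bool" where
  "proper_ereal f \<longleftrightarrow> (\<forall>z. f z \<noteq> -\<infinity>) \<and> (\<exists>z. f z \<noteq> \<infinity>)"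

definition convex_ereal :: "(real \<Rightarrow> ereal) \<Rightarrow> bool" where
  "convex_ereal f \<longleftrightarrow> (\<forall>z1 z2 t. 0 \<le> t \<and> t \<le> 1 \<longrightarrow>
      f (t * z1 + (1 - t) * z2) \<le> ereal t * f z1 + ereal (1 - t) * f z2)"

text \<open>Standing assumptions (s1), (s2) on the integrand s, for x in \<Omega>.
  We also assume s is a Borel (normal) integrand so that the integrals make sense.\<close>
definition admissible_s :: "'a::euclidean_space set \<Rightarrow> (real \<Rightarrow> 'a \<Rightarrow> ereal) \<Rightarrow> bool" where
  "admissible_s \<Omega> s \<longleftrightarrow>
     (\<forall>x\<in>\<Omega>. proper_ereal (\<lambda>z. s z x) \<and> lsc_ereal (\<lambda>z. s z x) \<and> convex_ereal (\<lambda>z. s z x)) \<and>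
     (\<forall>x\<in>\<Omega>. \<forall>z<0. s z x = \<infinity>) \<and> (\<forall>x\<in>\<Omega>. s 0 x = 0) \<and>
     (\<exists>m::real. \<forall>x\<in>\<Omega>. \<forall>z. ereal m \<le> s z x) \<and>
     ((\<lambda>z. (INF x\<in>\<Omega>. s z x) / ereal z) \<longlongrightarrow> \<infinity>) at_top \<and>
     (\<lambda>(z, x). s z x) \<in> borel_measurable borel"

text \<open>Legendre transform in the first variable (sup over the effective domain; for finite p this
  is the usual sup over all z, and it also fixes the convention for p = +/- infinity).\<close>
definition sstar :: "(real \<Rightarrow> 'a \<Rightarrow> ereal) \<Rightarrow> ereal \<Rightarrow> 'a \<Rightarrow> ereal" where
  "sstar s p x = (SUP z\<in>{z. s z x \<noteq> \<infinity>}. p * ereal z - s z x)"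

definition subdiff_sstar :: "(real \<Rightarrow> 'a \<Rightarrow> ereal) \<Rightarrow> real \<Rightarrow> 'a \<Rightarrow> real set" where
  "subdiff_sstar s b x =
     {z. \<forall>q::real. sstar s (ereal b) x + ereal (z * (q - b)) \<le> sstar s (ereal q) x}"

definition eint :: "'a measure \<Rightarrow> ('a \<Rightarrow> ereal) \<Rightarrow> ereal" where
  "eint M f = enn2ereal (\<integral>\<^sup>+ x. e2ennreal (f x) \<partial>M) - enn2ereal (\<integral>\<^sup>+ x. e2ennreal (- f x) \<partial>M)"

definition Efun :: "'a::euclidean_space set \<Rightarrow> (real \<Rightarrow> 'a \<Rightarrow> ereal) \<Rightarrow> ('a \<Rightarrow> real) \<Rightarrow> ereal" where
  "Efun \<Omega> s \<rho> = eint (lebesgue_on \<Omega>) (\<lambda>x. s (\<rho> x) x)"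

definition Estar :: "'a::euclidean_space set \<Rightarrow> (real \<Rightarrow> 'a \<Rightarrow> ereal) \<Rightarrow> ('a \<Rightarrow> ereal) \<Rightarrow> ereal" where
  "Estar \<Omega> s p = eint (lebesgue_on \<Omega>) (\<lambda>x. sstar s (p x) x)"

definition Xspace :: "'a::euclidean_space set \<Rightarrow> (real \<Rightarrow> 'a \<Rightarrow> ereal) \<Rightarrow> ('a \<Rightarrow> real) set" where
  "Xspace \<Omega> s = {\<rho>. integrable (lebesgue_on \<Omega>) \<rho> \<and> Efun \<Omega> s \<rho> < \<infinity>}"

definition Xstar :: "'a::euclidean_space set \<Rightarrow> (real \<Rightarrow> 'a \<Rightarrow> ereal) \<Rightarrow> ('a \<Rightarrow> ereal) set" where
  "Xstar \<Omega> s = {p. p \<in> borel_measurable (lebesgue_on \<Omega>) \<and> Estar \<Omega> s p < \<infinity>}"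

definition grad :: "('a::euclidean_space \<Rightarrow> real) \<Rightarrow> 'a \<Rightarrow> 'a" where
  "grad f x = (SOME g. (f has_derivative (\<lambda>h. g \<bullet> h)) (at x))"

definition admissible_cost :: "('a::euclidean_space \<Rightarrow> 'a \<Rightarrow> real) \<Rightarrow> bool" where
  "admissible_cost c \<longleftrightarrow>
     (\<forall>x y. 0 \<le> c x y) \<and> (\<forall>x y. c x y = c y x) \<and> (\<forall>x. c x x = 0) \<and>
     (\<exists>c'. (\<forall>z. ((\<lambda>(x, y). c x y) has_derivative blinfun_apply (c' z)) (at z)) \<and>
           continuous_on UNIV c') \<and>
     (\<forall>x0. inj (\<lambda>y. grad (\<lambda>x. c x y) x0))"

definition ctrans :: "'a set \<Rightarrow> ('a \<Rightarrow> 'a \<Rightarrow> real) \<Rightarrow> ('a \<Rightarrow> ereal) \<Rightarrow> 'a \<Rightarrow> ereal" where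
  "ctrans \<Omega> c p y = (INF x\<in>\<Omega>. p x + ereal (c x y))"

definition cbartrans :: "'a set \<Rightarrow> ('a \<Rightarrow> 'a \<Rightarrow> real) \<Rightarrow> ('a \<Rightarrow> ereal) \<Rightarrow> 'a \<Rightarrow> ereal" where
  "cbartrans \<Omega> c q x = (SUP y\<in>\<Omega>. q y - ereal (c x y))"

definition c_concave :: "'a set \<Rightarrow> ('a \<Rightarrow> 'a \<Rightarrow> real) \<Rightarrow> ('a \<Rightarrow> ereal) \<Rightarrow> bool" where
  "c_concave \<Omega> c p \<longleftrightarrow> (\<forall>x\<in>\<Omega>. cbartrans \<Omega> c (ctrans \<Omega> c p) x = p x)"

definition Jstar :: "'a::euclidean_space set \<Rightarrow> (real \<Rightarrow> 'a \<Rightarrow> ereal) \<Rightarrow> ('a \<Rightarrow> 'a \<Rightarrow> real)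
    \<Rightarrow> ('a \<Rightarrow> ereal) \<Rightarrow> ('a \<Rightarrow> real) \<Rightarrow> ereal" where
  "Jstar \<Omega> s c p \<rho> = eint (lebesgue_on \<Omega>) (\<lambda>y. ereal (\<rho> y) * ctrans \<Omega> c p y) - Estar \<Omega> s p"

definition Sigma_max :: "'a::euclidean_space set \<Rightarrow> (real \<Rightarrow> 'a \<Rightarrow> ereal) \<Rightarrow> ('a \<Rightarrow> 'a \<Rightarrow> real)
    \<Rightarrow> ('a \<Rightarrow> real) \<Rightarrow> ('a \<Rightarrow> ereal) set" where
  "Sigma_max \<Omega> s c \<rho> =
     {p. p \<in> Xstar \<Omega> s \<and> c_concave \<Omega> c p \<and>
         (\<forall>q. q \<in> Xstar \<Omega> s \<and> c_concave \<Omega> c q \<longrightarrow> Jstar \<Omega> s c q \<rho> \<le> Jstar \<Omega> s c p \<rho>)}"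

definition condN :: "'a::euclidean_space set \<Rightarrow> (real \<Rightarrow> 'a \<Rightarrow> ereal) \<Rightarrow> ('a \<Rightarrow> real) \<Rightarrow> bool" where
  "condN \<Omega> s \<rho> \<longleftrightarrow>
     0 < integral\<^sup>L (lebesgue_on \<Omega>) \<rho> \<and>
     ereal (integral\<^sup>L (lebesgue_on \<Omega>) \<rho>) <
       Lim at_top (\<lambda>b::real. eint (lebesgue_on \<Omega>) (\<lambda>x. Sup (ereal ` subdiff_sstar s b x)))"

end

(*
  A finite c-concave p satisfies p = (p^c)^cbar, and the right-hand side extends p to the closure
  of the domain with a modulus of continuity that depends only on c; moreover a c-concave function
  is either identically +oo, identically -oo, or finite. Condition (N) provides a level b_N beyond
  which the slopes of s* carry more mass than rho, so the dual value decreases once p is large: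
  along maximizing sequences p stays uniformly bounded, and Arzela-Ascoli yields uniformly
  convergent subsequences along which the dual value converges. This gives a maximizer, and
  likewise a maximizer p* with least integral. Since the c-transform of min(p,p') dominates the
  minimum of the c-transforms and s*(min) + s*(max) = s*(p) + s*(p'), the c-concave envelopes of
  min(p,p') and max(p,p') have at least the total dual value of p and p'; so for maximizers p the
  envelope of min(p*,p) is again a maximizer. It lies below p* and has no larger integral, hence
  equals p* almost everywhere, and everywhere by continuity: p* <= p.
*)
theory Submission
  imports Defs "HOL-Complex_Analysis.Great_Picard"
begin

lemma ereal_minus_real_le_iff: "a - ereal r \<le> b \<longleftrightarrow> a \<le> b + ereal r"
  by (simp add: ereal_minus_le)

lemma ereal_real_of_ereal_close:
  assumes "u \<le> ereal a + ereal D" "ereal a \<le> u + ereal D"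
  shows "u = ereal (real_of_ereal u)" "\<bar>real_of_ereal u - a\<bar> \<le> D"
  using assms by (cases u; simp)+

lemma enn2ereal_eq_ereal_enn2real: "x < \<infinity> \<Longrightarrow> enn2ereal x = ereal (enn2real x)"
  by (metis enn2ereal_ennreal enn2real_nonneg ennreal_enn2real infinity_ennreal_def)

lemma eint_cong:
  assumes "\<And>x. x \<in> space M \<Longrightarrow> f x = g x" shows "eint M f = eint M g"
  unfolding eint_def using assms by (simp cong: nn_integral_cong)

lemma eint_ereal_eq_integral:
  assumes "integrable M f"
  shows "eint M (\<lambda>x. ereal (f x)) = ereal (integral\<^sup>L M f)"
proof -
  have n: "(\<integral>\<^sup>+ x. ennreal (norm (f x)) \<partial>M) < \<infinity>" using assms integrable_iff_bounded by blast
  have "(\<integral>\<^sup>+ x. ennreal (f x) \<partial>M) < \<infinity>" "(\<integral>\<^sup>+ x. ennreal (- f x) \<partial>M) < \<infinity>"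
    by (rule le_less_trans[OF _ n], rule nn_integral_mono, simp)+
  then show ?thesis
    unfolding eint_def real_lebesgue_integral_def[OF assms]
    by (simp add: enn2ereal_eq_ereal_enn2real)
qed

lemma eint_nonneg_eq_nn_integral:
  assumes "\<And>x. x \<in> space M \<Longrightarrow> 0 \<le> f x"
  shows "eint M f = enn2ereal (\<integral>\<^sup>+ x. e2ennreal (f x) \<partial>M)"
proof -
  have "(\<integral>\<^sup>+ x. e2ennreal (- f x) \<partial>M) = (\<integral>\<^sup>+ x. 0 \<partial>M)"
    using assms by (intro nn_integral_cong) (simp add: e2ennreal_neg)
  then show ?thesis unfolding eint_def by (simp add: zero_ennreal.rep_eq)
qed

lemma convex_on_slope_left_le_right:
  fixes f :: "real \<Rightarrow> real"
  assumes cvx: "convex_on UNIV f" and "t < b" "0 < h"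
  shows "(f t - f b) / (t - b) \<le> (f (b + h) - f b) / h"
proof -
  have "(f t - f b) / (t - b) \<le> (f t - f (b+h)) / (t - (b+h))"
    using convex_on_slope_le(1)[OF cvx, of t "b+h" b] assms(2,3) by auto
  also have "\<dots> \<le> (f b - f (b+h)) / (b - (b+h))"
    using convex_on_slope_le(2)[OF cvx, of t "b+h" b] assms(2,3) by auto
  also have "\<dots> = (f (b + h) - f b) / h" using assms(3) by (simp add: field_simps)
  finally show ?thesis .
qed

lemma convex_on_max_subgradient:
  fixes f :: "real \<Rightarrow> real"
  assumes cvx: "convex_on UNIV f"
  obtains d where "\<And>t. f b + d * (t - b) \<le> f t"
    "\<And>z. (\<And>t. f b + z * (t - b) \<le> f t) \<Longrightarrow> z \<le> d"
proof -
  define S where "S = (\<lambda>h. (f (b + h) - f b) / h) ` {0<..}"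
    \<comment> \<open>d = Inf S, the right derivative at b\<close>
  note left_slope_le = convex_on_slope_left_le_right[OF cvx, of _ b]
  have bdd: "bdd_below S"
    unfolding S_def bdd_below_def using left_slope_le[of "b - 1"] by auto
  have ne: "S \<noteq> {}" unfolding S_def by auto
  show ?thesis
  proof
    fix t
    consider "t > b" | "t = b" | "t < b" by linarith
    then show "f b + Inf S * (t - b) \<le> f t"
    proof cases
      case 1
      have "Inf S \<le> (f (b + (t - b)) - f b) / (t - b)"
        unfolding S_def by (rule cInf_lower[OF imageI bdd[unfolded S_def]]) (use 1 in simp)
      then show ?thesis using 1 by (simp add: pos_le_divide_eq)
    next
      case 3
      have "(f t - f b) / (t - b) \<le> Inf S"
        by (rule cInf_greatest[OF ne]) (use left_slope_le 3 S_def in auto)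
      then show ?thesis using 3 by (simp add: neg_divide_le_eq)
    qed simp
  next
    fix z assume z: "\<And>t. f b + z * (t - b) \<le> f t"
    show "z \<le> Inf S"
    proof (rule cInf_greatest[OF ne])
      fix y assume "y \<in> S"
      then obtain h where h: "h > 0" "y = (f (b + h) - f b) / h" unfolding S_def by auto
      have "f b + z * h \<le> f (b + h)" using z[of "b+h"] by simp
      then show "z \<le> y" using h by (simp add: pos_le_divide_eq)
    qed
  qed
qed

lemma positive_measure_if_integral_pos:
  fixes f :: "'a \<Rightarrow> real"
  assumes f: "integrable M f" and nn: "AE x in M. 0 \<le> f x" and pos: "0 < integral\<^sup>L M f"
  shows "{x \<in> space M. 0 < f x} \<in> sets M" "0 < emeasure M {x \<in> space M. 0 < f x}"
proof -
  show A: "{x \<in> space M. 0 < f x} \<in> sets M"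
    using borel_measurable_integrable[OF f] by measurable
  show "0 < emeasure M {x \<in> space M. 0 < f x}"
  proof (rule ccontr)
    assume "\<not> 0 < emeasure M {x \<in> space M. 0 < f x}"
    then have "AE x in M. \<not> 0 < f x"
      by (intro AE_iff_measurable[OF A, THEN iffD2]) (auto simp: zero_less_iff_neq_zero)
    then have "AE x in M. f x = 0" using nn by eventually_elim simp
    then show False using integral_eq_zero_AE pos by force
  qed
qed

lemma continuous_on_AE_zero_imp_zero:
  fixes f :: "'a::euclidean_space \<Rightarrow> real"
  assumes S: "open S" and cont: "continuous_on S f" and ae: "AE x in lebesgue_on S. f x = 0"
    and x: "x \<in> S"
  shows "f x = 0"
proof (rule ccontr)
  define U where "U = S \<inter> f -` (- {0})"
  assume "f x \<noteq> 0"
  then have "U \<noteq> {}" using x unfolding U_def by auto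
  moreover have U_open: "open U" unfolding U_def using continuous_open_preimage[OF cont S] by blast
  ultimately have "\<not> negligible U" by (rule open_not_negligible[rotated])
  from ae obtain N where N: "{x \<in> space (lebesgue_on S). f x \<noteq> 0} \<subseteq> N"
    "emeasure (lebesgue_on S) N = 0" "N \<in> sets (lebesgue_on S)"
    by (rule AE_E)
  have "U \<subseteq> N" using N(1) by (auto simp: U_def)
  then have "emeasure (lebesgue_on S) U = 0"
    using emeasure_mono[OF _ N(3)] N(2) by (metis le_zero_eq)
  then have "emeasure lebesgue U = 0"
    using U_open S by (subst (asm) emeasure_restrict_space) (auto simp: U_def borel_open)
  then have "negligible U" using U_open by (simp add: negligible_iff_emeasure0 borel_open)
  with \<open>\<not> negligible U\<close> show False ..
qed

lemma LIMSEQ_subseq_if_abs_diff_le_inverse: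
  fixes a :: "nat \<Rightarrow> real"
  assumes "\<And>n. \<bar>a n - M\<bar> \<le> inverse (real (Suc n))" and "strict_mono r"
  shows "(\<lambda>n. a (r n)) \<longlonglongrightarrow> M"
proof -
  have "(\<lambda>n. a n - M) \<longlonglongrightarrow> 0"
  proof (rule tendsto_sandwich[of "\<lambda>n. - inverse (real (Suc n))" _ _ "\<lambda>n. inverse (real (Suc n))"])
    show "(\<lambda>n. inverse (real (Suc n))) \<longlonglongrightarrow> 0" by (rule LIMSEQ_inverse_real_of_nat)
    from tendsto_minus[OF this] show "(\<lambda>n. - inverse (real (Suc n))) \<longlonglongrightarrow> 0" by simp
    have "- inverse (real (Suc n)) \<le> a n - M" "a n - M \<le> inverse (real (Suc n))" for n
      using assms(1)[of n] unfolding abs_le_iff by linarith+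
    then show "\<forall>\<^sub>F n in sequentially. - inverse (real (Suc n)) \<le> a n - M"
      "\<forall>\<^sub>F n in sequentially. a n - M \<le> inverse (real (Suc n))" by simp_all
  qed
  then have "a \<longlonglongrightarrow> M" by (rule LIM_zero_cancel)
  from LIMSEQ_subseq_LIMSEQ[OF this assms(2)] show ?thesis by (simp add: o_def)
qed

lemma uniform_imp_LIMSEQ:
  assumes "\<And>e. 0 < e \<Longrightarrow> \<exists>N. \<forall>n\<ge>N. \<forall>x\<in>A. \<bar>f n x - g x\<bar> \<le> e" and "x \<in> A"
  shows "(\<lambda>n. f n x) \<longlonglongrightarrow> (g x :: real)"
proof (rule LIMSEQ_I)
  fix e :: real assume "0 < e"
  then obtain N where "\<forall>n\<ge>N. \<forall>x\<in>A. \<bar>f n x - g x\<bar> \<le> e / 2" using assms(1)[of "e / 2"] by auto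
  then show "\<exists>N. \<forall>n\<ge>N. norm (f n x - g x) < e" using assms(2) \<open>0 < e\<close> by force
qed

section \<open>c-transforms\<close>

lemma ctrans_le: "x \<in> \<Omega> \<Longrightarrow> ctrans \<Omega> c p y \<le> p x + ereal (c x y)"
  unfolding ctrans_def by (rule INF_lower)

lemma cbartrans_ge: "y \<in> \<Omega> \<Longrightarrow> q y - ereal (c x y) \<le> cbartrans \<Omega> c q x"
  unfolding cbartrans_def by (rule SUP_upper)

lemma cbartrans_ctrans_le: "x \<in> \<Omega> \<Longrightarrow> cbartrans \<Omega> c (ctrans \<Omega> c p) x \<le> p x"
  unfolding cbartrans_def
  by (rule SUP_least) (simp add: ereal_minus_real_le_iff ctrans_le)

lemma ctrans_cbartrans_ge: "y \<in> \<Omega> \<Longrightarrow> q y \<le> ctrans \<Omega> c (cbartrans \<Omega> c q) y"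
  unfolding ctrans_def
  by (rule INF_greatest) (simp add: ereal_minus_real_le_iff[symmetric] cbartrans_ge)

lemma ctrans_mono:
  assumes "\<And>x. x \<in> \<Omega> \<Longrightarrow> p x \<le> p' x" shows "ctrans \<Omega> c p y \<le> ctrans \<Omega> c p' y"
  unfolding ctrans_def by (rule INF_mono) (use assms add_right_mono in blast)

lemma ctrans_cbartrans_ctrans:
  assumes "y \<in> \<Omega>"
  shows "ctrans \<Omega> c (cbartrans \<Omega> c (ctrans \<Omega> c p)) y = ctrans \<Omega> c p y"
  by (rule order_antisym[OF ctrans_mono[OF cbartrans_ctrans_le] ctrans_cbartrans_ge[OF assms]])

lemma cbartrans_cong:
  assumes "\<And>y. y \<in> \<Omega> \<Longrightarrow> q y = q' y" shows "cbartrans \<Omega> c q x = cbartrans \<Omega> c q' x"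
  unfolding cbartrans_def by (rule SUP_cong) (simp_all add: assms)

lemma c_concave_cbartrans_ctrans: "c_concave \<Omega> c (cbartrans \<Omega> c (ctrans \<Omega> c p))"
  unfolding c_concave_def by (intro ballI cbartrans_cong ctrans_cbartrans_ctrans)

lemma ctrans_min_ge:
  "min (ctrans \<Omega> c p1 y) (ctrans \<Omega> c p2 y) \<le> ctrans \<Omega> c (\<lambda>x. min (p1 x) (p2 x)) y"
  unfolding ctrans_def
proof (rule INF_greatest)
  fix x assume x: "x \<in> \<Omega>"
  show "min (INF x\<in>\<Omega>. p1 x + ereal (c x y)) (INF x\<in>\<Omega>. p2 x + ereal (c x y))
      \<le> min (p1 x) (p2 x) + ereal (c x y)"
    using INF_lower[OF x, of "\<lambda>x. p1 x + ereal (c x y)"] INF_lower[OF x, of "\<lambda>x. p2 x + ereal (c x y)"]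
    by (cases "p1 x \<le> p2 x") (auto simp: min_le_iff_disj min_def)
qed

lemma ctrans_shift_le:
  assumes "\<And>x. x \<in> \<Omega> \<Longrightarrow> p x \<le> p' x + ereal e"
  shows "ctrans \<Omega> c p y \<le> ctrans \<Omega> c p' y + ereal e"
  unfolding ereal_minus_real_le_iff[symmetric] ctrans_def[of _ _ p']
proof (rule INF_greatest)
  fix x assume x: "x \<in> \<Omega>"
  have "ctrans \<Omega> c p y \<le> p x + ereal (c x y)" by (rule ctrans_le[OF x])
  also have "\<dots> \<le> p' x + ereal (c x y) + ereal e"
    using add_right_mono[OF assms[OF x], of "ereal (c x y)"] by (simp add: ac_simps)
  finally show "ctrans \<Omega> c p y - ereal e \<le> p' x + ereal (c x y)"
    by (simp add: ereal_minus_real_le_iff)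
qed

lemma cbartrans_shift_le:
  assumes "\<And>y. y \<in> \<Omega> \<Longrightarrow> q y \<le> q' y + ereal e"
  shows "cbartrans \<Omega> c q x \<le> cbartrans \<Omega> c q' x + ereal e"
  unfolding cbartrans_def[of _ _ q]
proof (rule SUP_least)
  fix y assume y: "y \<in> \<Omega>"
  have "q y - ereal (c x y) \<le> (q' y + ereal e) - ereal (c x y)"
    using assms[OF y] by (rule ereal_minus_mono) simp
  also have "\<dots> = (q' y - ereal (c x y)) + ereal e" by (cases "q' y") auto
  also have "\<dots> \<le> cbartrans \<Omega> c q' x + ereal e" using cbartrans_ge[OF y] by (rule add_right_mono)
  finally show "q y - ereal (c x y) \<le> cbartrans \<Omega> c q' x + ereal e" .
qed

lemma cbartrans_modulus:
  assumes "\<And>y. y \<in> \<Omega> \<Longrightarrow> c x' y \<le> c x y + e"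
  shows "cbartrans \<Omega> c q x \<le> cbartrans \<Omega> c q x' + ereal e"
  unfolding cbartrans_def[of _ _ _ x]
proof (rule SUP_least)
  fix y assume y: "y \<in> \<Omega>"
  have "q y - ereal (c x y) \<le> (q y - ereal (c x' y)) + ereal e"
    using assms[OF y] by (cases "q y") auto
  also have "\<dots> \<le> cbartrans \<Omega> c q x' + ereal e" using cbartrans_ge[OF y] by (rule add_right_mono)
  finally show "q y - ereal (c x y) \<le> cbartrans \<Omega> c q x' + ereal e" .
qed

lemma ctrans_modulus:
  assumes "\<And>x. x \<in> \<Omega> \<Longrightarrow> c x y \<le> c x y' + e"
  shows "ctrans \<Omega> c p y \<le> ctrans \<Omega> c p y' + ereal e"
  unfolding ereal_minus_real_le_iff[symmetric] ctrans_def[of _ _ _ y']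
proof (rule INF_greatest)
  fix x assume x: "x \<in> \<Omega>"
  have "ctrans \<Omega> c p y \<le> p x + ereal (c x y)" by (rule ctrans_le[OF x])
  also have "\<dots> \<le> p x + ereal (c x y') + ereal e" using assms[OF x] by (cases "p x") auto
  finally show "ctrans \<Omega> c p y - ereal e \<le> p x + ereal (c x y')"
    by (simp add: ereal_minus_real_le_iff)
qed

section \<open>The conjugate integrand\<close>

locale admissible_integrand =
  fixes \<Omega> :: "'a::euclidean_space set" and s :: "real \<Rightarrow> 'a \<Rightarrow> ereal"
  assumes admissible: "admissible_s \<Omega> s"
begin

lemma s_neg: "x \<in> \<Omega> \<Longrightarrow> z < 0 \<Longrightarrow> s z x = \<infinity>"
  and s_zero: "x \<in> \<Omega> \<Longrightarrow> s 0 x = 0"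
  and s_convex: "x \<in> \<Omega> \<Longrightarrow> convex_ereal (\<lambda>z. s z x)"
  and s_measurable: "(\<lambda>(z, x). s z x) \<in> borel_measurable borel"
  using admissible unfolding admissible_s_def by auto

lemma s_bounded_below: obtains m where "\<And>x z. x \<in> \<Omega> \<Longrightarrow> ereal m \<le> s z x"
  using admissible that unfolding admissible_s_def by blast

lemma s_finite:
  assumes "x \<in> \<Omega>" "s z x \<noteq> \<infinity>"
  obtains w where "s z x = ereal w" "0 \<le> z"
proof -
  obtain m where "ereal m \<le> s z x" using s_bounded_below assms(1) by blast
  then obtain w where "s z x = ereal w" using assms(2) by (cases "s z x") auto
  moreover have "0 \<le> z" using s_neg[OF assms(1), of z] assms(2) by force
  ultimately show ?thesis using that by blast
qed

lemma s_superlinear: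
  obtains Z where "\<And>z x. Z \<le> z \<Longrightarrow> x \<in> \<Omega> \<Longrightarrow> ereal (B * z) \<le> s z x"
proof -
  have "((\<lambda>z. (INF x\<in>\<Omega>. s z x) / ereal z) \<longlongrightarrow> \<infinity>) at_top"
    using admissible unfolding admissible_s_def by auto
  then have "\<forall>\<^sub>F z in at_top. ereal B < (INF x\<in>\<Omega>. s z x) / ereal z"
    unfolding tendsto_PInfty by auto
  then obtain N where N: "\<And>z. z \<ge> N \<Longrightarrow> ereal B < (INF x\<in>\<Omega>. s z x) / ereal z"
    unfolding eventually_at_top_linorder by auto
  show ?thesis
  proof (rule that[of "max N 1"])
    fix z x assume z: "max N 1 \<le> z" and x: "x \<in> \<Omega>"
    have lt: "ereal B < (INF x\<in>\<Omega>. s z x) / ereal z" using N z by auto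
    have "ereal (B * z) \<le> (INF x\<in>\<Omega>. s z x)"
    proof (cases "INF x\<in>\<Omega>. s z x")
      case (real r)
      then show ?thesis using lt z by (simp add: pos_less_divide_eq less_imp_le)
    qed (use lt z in simp_all)
    also have "\<dots> \<le> s z x" using x by (rule INF_lower)
    finally show "ereal (B * z) \<le> s z x" .
  qed
qed

lemma s_scaled_le:
  assumes x: "x \<in> \<Omega>" and t: "0 \<le> t" "t \<le> 1" and w: "s z x = ereal w"
  shows "s (t * z) x \<le> ereal (t * w)"
  using s_convex[OF x, unfolded convex_ereal_def, rule_format, of t z 0] t w s_zero[OF x] by simp

lemma sstar_nonneg:
  assumes "x \<in> \<Omega>" shows "0 \<le> sstar s p x"
proof -
  have "p * ereal 0 - s 0 x \<le> sstar s p x"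
    unfolding sstar_def by (rule SUP_upper) (simp add: s_zero[OF assms])
  then show ?thesis using s_zero[OF assms] by (simp add: zero_ereal_def[symmetric])
qed

lemma sstar_bounded_above:
  obtains K where "\<And>x. x \<in> \<Omega> \<Longrightarrow> sstar s (ereal b) x \<le> ereal K"
proof -
  obtain Z where Z: "\<And>z x. Z \<le> z \<Longrightarrow> x \<in> \<Omega> \<Longrightarrow> ereal ((\<bar>b\<bar> + 1) * z) \<le> s z x"
    using s_superlinear by blast
  obtain m where m: "\<And>x z. x \<in> \<Omega> \<Longrightarrow> ereal m \<le> s z x" using s_bounded_below by blast
  show ?thesis
  proof (rule that[of "\<bar>b\<bar> * \<bar>Z\<bar> - m"])
    fix x assume x: "x \<in> \<Omega>"
    show "sstar s (ereal b) x \<le> ereal (\<bar>b\<bar> * \<bar>Z\<bar> - m)" unfolding sstar_def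
    proof (rule SUP_least)
      fix z assume "z \<in> {z. s z x \<noteq> \<infinity>}"
      then obtain w where w: "s z x = ereal w" "0 \<le> z" using s_finite[OF x] by blast
      have bz: "b * z \<le> \<bar>b\<bar> * z" using w(2) by (simp add: mult_right_mono)
      have m: "m \<le> w" "m \<le> 0" using m[OF x, of z] m[OF x, of 0] w s_zero[OF x] by auto
      have "b * z - w \<le> \<bar>b\<bar> * \<bar>Z\<bar> - m"
      proof (cases "Z \<le> z")
        case True
        then have "(\<bar>b\<bar> + 1) * z \<le> w" using Z[OF _ x, of z] w by simp
        then have "b * z - w \<le> - z" using bz by (simp add: distrib_right)
        moreover have "0 \<le> \<bar>b\<bar> * \<bar>Z\<bar>" by simp
        ultimately show ?thesis using m w(2) by linarith
      next
        case False
        then have "\<bar>b\<bar> * z \<le> \<bar>b\<bar> * \<bar>Z\<bar>" by (simp add: mult_left_mono)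
        then show ?thesis using bz m by linarith
      qed
      then show "ereal b * ereal z - s z x \<le> ereal (\<bar>b\<bar> * \<bar>Z\<bar> - m)" using w by simp
    qed
  qed
qed

definition sstar_real :: "real \<Rightarrow> 'a \<Rightarrow> real" where
  "sstar_real b x = real_of_ereal (sstar s (ereal b) x)"

lemma sstar_eq_sstar_real:
  assumes "x \<in> \<Omega>" shows "sstar s (ereal b) x = ereal (sstar_real b x)"
proof -
  obtain K where "\<And>x. x \<in> \<Omega> \<Longrightarrow> sstar s (ereal b) x \<le> ereal K" using sstar_bounded_above by blast
  then have "sstar s (ereal b) x \<le> ereal K" using assms .
  then show ?thesis
    using sstar_nonneg[OF assms, of "ereal b"] unfolding sstar_real_def
    by (cases "sstar s (ereal b) x") auto
qed

lemma sstar_real_nonneg: "x \<in> \<Omega> \<Longrightarrow> 0 \<le> sstar_real b x"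
  using sstar_nonneg[of x "ereal b"] sstar_eq_sstar_real[of x b] by simp

lemma sstar_real_ge:
  assumes "x \<in> \<Omega>" "s z x = ereal w" shows "b * z - w \<le> sstar_real b x"
proof -
  have "ereal b * ereal z - s z x \<le> sstar s (ereal b) x"
    unfolding sstar_def by (rule SUP_upper) (use assms in simp)
  then show ?thesis using assms sstar_eq_sstar_real by simp
qed

lemma sstar_real_mono:
  assumes x: "x \<in> \<Omega>" and "b \<le> b'" shows "sstar_real b x \<le> sstar_real b' x"
proof -
  have "sstar s (ereal b) x \<le> sstar s (ereal b') x" unfolding sstar_def
  proof (rule SUP_mono)
    fix z assume z: "z \<in> {z. s z x \<noteq> \<infinity>}"
    then obtain w where w: "s z x = ereal w" "0 \<le> z" using s_finite[OF x] by blast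
    have "b * z \<le> b' * z" using assms(2) w(2) by (simp add: mult_right_mono)
    then show "\<exists>m\<in>{z. s z x \<noteq> \<infinity>}. ereal b * ereal z - s z x \<le> ereal b' * ereal m - s m x"
      using z w by (intro bexI[of _ z]) auto
  qed
  then show ?thesis using sstar_eq_sstar_real[OF x] by simp
qed

lemma sstar_real_bounded:
  obtains K where "\<And>x t. x \<in> \<Omega> \<Longrightarrow> t \<le> B \<Longrightarrow> \<bar>sstar_real t x\<bar> \<le> K"
proof -
  obtain K where K: "\<And>x. x \<in> \<Omega> \<Longrightarrow> sstar s (ereal B) x \<le> ereal K" using sstar_bounded_above by blast
  show ?thesis
  proof (rule that[of K])
    fix x t assume "x \<in> \<Omega>" "t \<le> B"
    then show "\<bar>sstar_real t x\<bar> \<le> K"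
      using K[of x] sstar_real_mono[of x t B] sstar_eq_sstar_real[of x B] sstar_real_nonneg[of x t] by simp
  qed
qed

lemma convex_on_sstar_real:
  assumes x: "x \<in> \<Omega>" shows "convex_on UNIV (\<lambda>b. sstar_real b x)"
  unfolding convex_on_def
proof (intro conjI ballI allI impI)
  fix b1 b2 u v :: real assume uv: "0 \<le> u" "0 \<le> v" "u + v = 1"
  have "sstar s (ereal (u *\<^sub>R b1 + v *\<^sub>R b2)) x \<le> ereal (u * sstar_real b1 x + v * sstar_real b2 x)"
    unfolding sstar_def
  proof (rule SUP_least)
    fix z assume "z \<in> {z. s z x \<noteq> \<infinity>}"
    then obtain w where w: "s z x = ereal w" using s_finite[OF x] by blast
    have "(u * b1 + v * b2) * z - w = u * (b1 * z - w) + v * (b2 * z - w)"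
      using uv by (simp add: algebra_simps) (metis add.commute distrib_left mult.commute mult_1)
    also have "\<dots> \<le> u * sstar_real b1 x + v * sstar_real b2 x"
      using sstar_real_ge[OF x w] uv by (intro add_mono mult_left_mono) auto
    finally show "ereal (u *\<^sub>R b1 + v *\<^sub>R b2) * ereal z - s z x
        \<le> ereal (u * sstar_real b1 x + v * sstar_real b2 x)"
      using w by simp
  qed
  then show "sstar_real (u *\<^sub>R b1 + v *\<^sub>R b2) x \<le> u * sstar_real b1 x + v * sstar_real b2 x"
    using sstar_eq_sstar_real[OF x] by simp
qed simp

lemma isCont_sstar_real:
  assumes "x \<in> \<Omega>" shows "isCont (\<lambda>b. sstar_real b x) b"
  using convex_on_continuous[OF open_UNIV convex_on_sstar_real[OF assms]]
  by (simp add: continuous_on_eq_continuous_at)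

lemma exists_rat_sstar_approx:
  assumes x: "x \<in> \<Omega>" and w: "s z x = ereal w" and y: "0 < y" "y < b * z - w"
  obtains q where "q \<in> \<rat>" "ereal y < ereal b * ereal q - s q x"
proof -
  have d: "0 < b * z - w" using y by simp
  have "0 \<le> z" using s_neg[OF x, of z] w by force
  moreover have "z \<noteq> 0" using d w s_zero[OF x] by auto
  ultimately have z: "0 < z" by simp
  have "y / (b * z - w) * z < z" using y z d by (simp add: divide_less_eq)
  then obtain q where q: "q \<in> \<rat>" "y / (b * z - w) * z < q" "q < z"
    using Rats_dense_in_real by blast
  define t where "t = q / z"
  have "0 < y / (b * z - w) * z" using y z d by simp
  then have t: "0 \<le> t" "t \<le> 1" "q = t * z" using q(2,3) z by (auto simp: t_def)
  have "y / (b * z - w) < t" unfolding t_def using q(2) z by (simp add: less_divide_eq)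
  then have "y < t * (b * z - w)" using d by (simp add: divide_less_eq mult.commute)
  then have "ereal y < ereal (b * q - t * w)" using t(3) by (simp add: algebra_simps)
  also have "\<dots> \<le> ereal b * ereal q - s q x"
    using s_scaled_le[OF x t(1,2) w] t(3) by (cases "s q x") auto
  finally show ?thesis using that q(1) by blast
qed

text \<open>A countable form of s*, which makes it measurable in x.\<close>
lemma sstar_eq_SUP_rat:
  assumes x: "x \<in> \<Omega>"
  shows "sstar s (ereal b) x = (SUP r\<in>(UNIV::rat set). ereal b * ereal (of_rat r) - s (of_rat r) x)"
    (is "_ = ?R")
proof (rule order_antisym)
  have R_nonneg: "0 \<le> ?R"
    using SUP_upper[of 0 UNIV "\<lambda>r. ereal b * ereal (of_rat r) - s (of_rat r) x"] s_zero[OF x]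
    by (simp add: zero_ereal_def[symmetric])
  show "sstar s (ereal b) x \<le> ?R" unfolding sstar_def
  proof (rule SUP_least)
    fix z assume "z \<in> {z. s z x \<noteq> \<infinity>}"
    then obtain w where w: "s z x = ereal w" using s_finite[OF x] by blast
    have "ereal (b * z - w) \<le> ?R"
    proof (rule dense_le)
      fix y assume y: "y < ereal (b * z - w)"
      show "y \<le> ?R"
      proof (cases "y \<le> 0")
        case True then show ?thesis using R_nonneg by (rule order_trans)
      next
        case False
        then obtain y' where "y = ereal y'" "0 < y'" "y' < b * z - w" using y by (cases y) auto
        then obtain q where q: "q \<in> \<rat>" "y < ereal b * ereal q - s q x"
          using exists_rat_sstar_approx[OF x w] by metis
        from q(1) obtain r where "q = of_rat r" by (rule Rats_cases)
        then have "ereal b * ereal q - s q x \<le> ?R" by (auto intro: SUP_upper)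
        then show ?thesis using q(2) by simp
      qed
    qed
    then show "ereal b * ereal z - s z x \<le> ?R" using w by simp
  qed
  show "?R \<le> sstar s (ereal b) x"
  proof (rule SUP_least)
    fix r :: rat
    show "ereal b * ereal (of_rat r) - s (of_rat r) x \<le> sstar s (ereal b) x"
      unfolding sstar_def by (cases "s (of_rat r) x = \<infinity>") (auto intro: SUP_upper)
  qed
qed

lemma measurable_s_comp:
  assumes u: "u \<in> borel_measurable (lebesgue_on \<Omega>)"
  shows "(\<lambda>x. s (u x) x) \<in> borel_measurable (lebesgue_on \<Omega>)"
proof -
  have "(\<lambda>x. (u x, x)) \<in> lebesgue_on \<Omega> \<rightarrow>\<^sub>M borel \<Otimes>\<^sub>M borel"
    using u by (intro measurable_Pair) (simp_all add: measurable_completion measurable_restrict_space1)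
  then have "(\<lambda>x. (u x, x)) \<in> lebesgue_on \<Omega> \<rightarrow>\<^sub>M borel" by (simp add: borel_prod)
  from measurable_comp[OF this s_measurable] show ?thesis by (simp add: o_def)
qed

lemma measurable_sstar_real_comp:
  assumes u: "u \<in> borel_measurable (lebesgue_on \<Omega>)"
  shows "(\<lambda>x. sstar_real (u x) x) \<in> borel_measurable (lebesgue_on \<Omega>)"
proof -
  have "(\<lambda>x. SUP r\<in>(UNIV::rat set). ereal (u x) * ereal (of_rat r) - s (of_rat r) x)
      \<in> borel_measurable (lebesgue_on \<Omega>)"
  proof (rule borel_measurable_SUP)
    fix r :: rat
    have "(\<lambda>x. ereal (u x * real_of_rat r)) \<in> borel_measurable (lebesgue_on \<Omega>)" using u by measurable
    then show "(\<lambda>x. ereal (u x) * ereal (of_rat r) - s (of_rat r) x) \<in> borel_measurable (lebesgue_on \<Omega>)"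
      using measurable_s_comp[of "\<lambda>_. of_rat r"] by (auto intro!: borel_measurable_ereal_diff)
  qed simp
  then have "(\<lambda>x. real_of_ereal (SUP r\<in>(UNIV::rat set). ereal (u x) * ereal (of_rat r) - s (of_rat r) x))
      \<in> borel_measurable (lebesgue_on \<Omega>)"
    by measurable
  then show ?thesis
    by (rule measurable_cong[THEN iffD1, rotated]) (simp add: sstar_real_def sstar_eq_SUP_rat)
qed

lemma subdiff_sstar_eq:
  assumes "x \<in> \<Omega>"
  shows "subdiff_sstar s b x = {z. \<forall>t. sstar_real b x + z * (t - b) \<le> sstar_real t x}"
  unfolding subdiff_sstar_def using sstar_eq_sstar_real[OF assms] by simp

definition max_subgrad :: "real \<Rightarrow> 'a \<Rightarrow> real" where
  "max_subgrad b x = Sup (subdiff_sstar s b x)"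

lemma max_subgrad:
  assumes x: "x \<in> \<Omega>"
  shows "max_subgrad b x \<in> subdiff_sstar s b x" "\<And>z. z \<in> subdiff_sstar s b x \<Longrightarrow> z \<le> max_subgrad b x"
proof -
  obtain d where d1: "\<And>t. sstar_real b x + d * (t - b) \<le> sstar_real t x"
    and d2: "\<And>z. (\<And>t. sstar_real b x + z * (t - b) \<le> sstar_real t x) \<Longrightarrow> z \<le> d"
    using convex_on_max_subgradient[OF convex_on_sstar_real[OF x], of b] by blast
  have d: "d \<in> subdiff_sstar s b x" "\<And>z. z \<in> subdiff_sstar s b x \<Longrightarrow> z \<le> d"
    unfolding subdiff_sstar_eq[OF x] using d1 by (auto intro: d2)
  have "max_subgrad b x = d" unfolding max_subgrad_def using d by (rule cSup_eq_maximum)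
  with d show "max_subgrad b x \<in> subdiff_sstar s b x"
    "\<And>z. z \<in> subdiff_sstar s b x \<Longrightarrow> z \<le> max_subgrad b x" by simp_all
qed

lemma max_subgrad_le:
  assumes "x \<in> \<Omega>" shows "sstar_real b x + max_subgrad b x * (t - b) \<le> sstar_real t x"
  using max_subgrad(1)[OF assms] unfolding subdiff_sstar_eq[OF assms] by blast

lemma Sup_subdiff_sstar:
  assumes "x \<in> \<Omega>" shows "Sup (ereal ` subdiff_sstar s b x) = ereal (max_subgrad b x)"
  using max_subgrad[OF assms] by (intro Sup_eqI) auto

lemma max_subgrad_nonneg:
  assumes x: "x \<in> \<Omega>" shows "0 \<le> max_subgrad b x"
proof (rule ccontr)
  assume "\<not> 0 \<le> max_subgrad b x"
  then have d: "max_subgrad b x < 0" by simp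
  define t where "t = b + 1 / max_subgrad b x"
  have "t \<le> b" using d unfolding t_def by (simp add: divide_neg_pos)
  have "sstar_real b x + max_subgrad b x * (t - b) \<le> sstar_real t x" by (rule max_subgrad_le[OF x])
  moreover have "max_subgrad b x * (t - b) = 1" unfolding t_def using d by simp
  moreover have "sstar_real t x \<le> sstar_real b x" using sstar_real_mono[OF x \<open>t \<le> b\<close>] .
  ultimately show False by simp
qed

lemma max_subgrad_mono:
  assumes x: "x \<in> \<Omega>" and "b \<le> b'" shows "max_subgrad b x \<le> max_subgrad b' x"
proof (cases "b = b'")
  case False
  then have "0 < b' - b" using assms(2) by simp
  moreover have "max_subgrad b x * (b' - b) \<le> max_subgrad b' x * (b' - b)"
    using max_subgrad_le[OF x, of b b'] max_subgrad_le[OF x, of b' b] by (simp add: algebra_simps)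
  ultimately show ?thesis by simp
qed simp

lemma sstar_PInf:
  assumes x: "x \<in> \<Omega>" and pos: "0 < sstar_real b x"
  shows "sstar s \<infinity> x = \<infinity>"
proof -
  have "0 < sstar s (ereal b) x" using pos sstar_eq_sstar_real[OF x] by simp
  then obtain z where z: "z \<in> {z. s z x \<noteq> \<infinity>}" "0 < ereal b * ereal z - s z x"
    unfolding sstar_def less_SUP_iff by blast
  then obtain v where v: "s z x = ereal v" "0 \<le> z" using s_finite[OF x] by blast
  have "0 < z" using z(2) v s_zero[OF x] by (cases "z = 0") auto
  then have "\<infinity> * ereal z - s z x = \<infinity>" using v by simp
  moreover have "\<infinity> * ereal z - s z x \<le> sstar s \<infinity> x" unfolding sstar_def using z(1) by (rule SUP_upper)
  ultimately show ?thesis by (simp add: top_unique)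
qed

lemma Estar_nonneg: "0 \<le> Estar \<Omega> s p"
  unfolding Estar_def using eint_nonneg_eq_nn_integral[of "lebesgue_on \<Omega>" "\<lambda>x. sstar s (p x) x"]
  by (simp add: sstar_nonneg)

definition capacity :: "real \<Rightarrow> ereal" where
  "capacity b = eint (lebesgue_on \<Omega>) (\<lambda>x. Sup (ereal ` subdiff_sstar s b x))"

lemma capacity_eq: "capacity b = enn2ereal (\<integral>\<^sup>+ x. ennreal (max_subgrad b x) \<partial>lebesgue_on \<Omega>)"
proof -
  have "(\<integral>\<^sup>+ x. e2ennreal (Sup (ereal ` subdiff_sstar s b x)) \<partial>lebesgue_on \<Omega>)
      = (\<integral>\<^sup>+ x. ennreal (max_subgrad b x) \<partial>lebesgue_on \<Omega>)"
    by (rule nn_integral_cong) (simp add: Sup_subdiff_sstar)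
  then show ?thesis
    unfolding capacity_def
    by (subst eint_nonneg_eq_nn_integral) (simp_all add: Sup_subdiff_sstar max_subgrad_nonneg)
qed

lemma mono_capacity: "mono capacity"
proof
  fix b b' :: real assume "b \<le> b'"
  then have "(\<integral>\<^sup>+ x. ennreal (max_subgrad b x) \<partial>lebesgue_on \<Omega>) \<le> (\<integral>\<^sup>+ x. ennreal (max_subgrad b' x) \<partial>lebesgue_on \<Omega>)"
    by (intro nn_integral_mono ennreal_leI max_subgrad_mono) auto
  then show "capacity b \<le> capacity b'" unfolding capacity_eq by (simp add: less_eq_ennreal.rep_eq)
qed

lemma capacity_tendsto_SUP: "(capacity \<longlongrightarrow> (SUP b. capacity b)) at_top"
proof (rule order_tendstoI)
  fix a assume "a < (SUP b. capacity b)"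
  then obtain b_N where b_N: "a < capacity b_N" by (auto simp: less_SUP_iff)
  have "a < capacity b" if "b_N \<le> b" for b
    using b_N monoD[OF mono_capacity that] by (rule less_le_trans)
  then show "\<forall>\<^sub>F b in at_top. a < capacity b"
    unfolding eventually_at_top_linorder by blast
next
  fix a assume "(SUP b. capacity b) < a"
  then show "\<forall>\<^sub>F b in at_top. capacity b < a"
    by (intro always_eventually allI) (meson SUP_upper UNIV_I le_less_trans)
qed

lemma Lim_capacity: "Lim at_top capacity = (SUP b. capacity b)"
  using tendsto_Lim[OF trivial_limit_at_top_linorder capacity_tendsto_SUP] .

end

section \<open>Finite c-concave functions for a bounded cost\<close>

locale cost_on_domain =
  fixes \<Omega> :: "'a::euclidean_space set" and c :: "'a \<Rightarrow> 'a \<Rightarrow> real"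
  assumes bounded_domain: "bounded \<Omega>" and nonempty_domain: "\<Omega> \<noteq> {}"
    and admissible: "admissible_cost c"
begin

lemma c_nonneg: "0 \<le> c x y" and c_sym: "c x y = c y x" and c_diag: "c x x = 0"
  using admissible unfolding admissible_cost_def by auto

lemma continuous_on_cost: "continuous_on A (\<lambda>(x, y). c x y)"
proof -
  obtain c' where "\<And>z. ((\<lambda>(x, y). c x y) has_derivative blinfun_apply (c' z)) (at z)"
    using admissible unfolding admissible_cost_def by blast
  then have "continuous_on UNIV (\<lambda>(x, y). c x y)" by (intro has_derivative_continuous_on) auto
  then show ?thesis by (rule continuous_on_subset) simp
qed

lemma compact_closure_domain: "compact (closure \<Omega>)"
  using bounded_domain by (simp add: compact_closure)

definition cmax :: real where
  "cmax = (SUP z\<in>closure \<Omega> \<times> closure \<Omega>. case_prod c z)"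

lemma cost_le_cmax:
  assumes "x \<in> closure \<Omega>" "y \<in> closure \<Omega>" shows "c x y \<le> cmax"
proof -
  have "compact ((\<lambda>(x, y). c x y) ` (closure \<Omega> \<times> closure \<Omega>))"
    by (intro compact_continuous_image continuous_on_cost compact_Times compact_closure_domain)
  then have "bdd_above ((\<lambda>(x, y). c x y) ` (closure \<Omega> \<times> closure \<Omega>))"
    by (intro bounded_imp_bdd_above compact_imp_bounded)
  then show ?thesis unfolding cmax_def using assms by (auto intro: cSUP_upper2)
qed

lemma cost_uniformly_continuous:
  assumes e: "0 < e"
  obtains d where "0 < d"
    "\<And>x x' y. x \<in> closure \<Omega> \<Longrightarrow> x' \<in> closure \<Omega> \<Longrightarrow> y \<in> closure \<Omega> \<Longrightarrow> dist x x' < d \<Longrightarrow>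
      \<bar>c x y - c x' y\<bar> < e"
proof -
  have "uniformly_continuous_on (closure \<Omega> \<times> closure \<Omega>) (\<lambda>(x, y). c x y)"
    by (intro compact_uniformly_continuous continuous_on_cost compact_Times compact_closure_domain)
  then obtain d where d: "0 < d" "\<And>z z'. z \<in> closure \<Omega> \<times> closure \<Omega> \<Longrightarrow> z' \<in> closure \<Omega> \<times> closure \<Omega> \<Longrightarrow>
      dist z' z < d \<Longrightarrow> dist ((\<lambda>(x, y). c x y) z') ((\<lambda>(x, y). c x y) z) < e"
    unfolding uniformly_continuous_on_def using e by metis
  show ?thesis
  proof (rule that[OF d(1)])
    fix x x' y assume xy: "x \<in> closure \<Omega>" "x' \<in> closure \<Omega>" "y \<in> closure \<Omega>" "dist x x' < d"
    then show "\<bar>c x y - c x' y\<bar> < e"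
      using d(2)[of "(x', y)" "(x, y)"] by (simp add: dist_Pair_Pair dist_real_def)
  qed
qed

lemma cbartrans_oscillation:
  assumes "x \<in> closure \<Omega>" "x' \<in> closure \<Omega>"
  shows "cbartrans \<Omega> c q x \<le> cbartrans \<Omega> c q x' + ereal cmax"
proof (rule cbartrans_modulus)
  fix y assume "y \<in> \<Omega>"
  then have "c x' y \<le> cmax" using cost_le_cmax[OF assms(2)] closure_subset by blast
  then show "c x' y \<le> c x y + cmax" using c_nonneg[of x y] by linarith
qed

lemma c_concave_oscillation:
  assumes "c_concave \<Omega> c q" "x \<in> \<Omega>" "x' \<in> \<Omega>"
  shows "q x \<le> q x' + ereal cmax"
  using cbartrans_oscillation[of x x' "ctrans \<Omega> c q"] assms closure_subset
  unfolding c_concave_def by auto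

definition finite_cconcave :: "('a \<Rightarrow> ereal) set" where
  "finite_cconcave = {p. c_concave \<Omega> c p \<and> (\<forall>x\<in>\<Omega>. p x \<noteq> \<infinity> \<and> p x \<noteq> -\<infinity>)}"

lemma c_concave_cases:
  assumes q: "c_concave \<Omega> c q"
  obtains "\<forall>x\<in>\<Omega>. q x = \<infinity>" | "\<forall>x\<in>\<Omega>. q x = -\<infinity>" | "q \<in> finite_cconcave"
proof (cases "\<exists>x0\<in>\<Omega>. q x0 \<noteq> \<infinity> \<and> q x0 \<noteq> -\<infinity>")
  case True
  then obtain x0 where x0: "x0 \<in> \<Omega>" "q x0 \<noteq> \<infinity>" "q x0 \<noteq> -\<infinity>" by blast
  have "q x \<noteq> \<infinity> \<and> q x \<noteq> -\<infinity>" if x: "x \<in> \<Omega>" for x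
    using c_concave_oscillation[OF q x x0(1)] c_concave_oscillation[OF q x0(1) x] x0
    by (cases "q x"; cases "q x0") auto
  then show ?thesis using q that(3) unfolding finite_cconcave_def by blast
next
  case False
  show ?thesis
  proof (cases "\<exists>x1\<in>\<Omega>. q x1 = -\<infinity>")
    case True
    then obtain x1 where "x1 \<in> \<Omega>" "q x1 = -\<infinity>" by blast
    then show ?thesis using c_concave_oscillation[OF q _ \<open>x1 \<in> \<Omega>\<close>] that(2) by auto
  qed (use False that(1) in blast)
qed

definition cc_env :: "('a \<Rightarrow> ereal) \<Rightarrow> 'a \<Rightarrow> ereal" where
  "cc_env p = cbartrans \<Omega> c (ctrans \<Omega> c p)"

text \<open>A finite c-concave p agrees on \<Omega> with cc_env p, which is defined on all of closure \<Omega>;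
  preal p is this real-valued extension of p.\<close>
definition preal :: "('a \<Rightarrow> ereal) \<Rightarrow> 'a \<Rightarrow> real" where
  "preal p x = real_of_ereal (cc_env p x)"

definition ctreal :: "('a \<Rightarrow> ereal) \<Rightarrow> 'a \<Rightarrow> real" where
  "ctreal p y = real_of_ereal (ctrans \<Omega> c p y)"

lemma cc_env_eq: "p \<in> finite_cconcave \<Longrightarrow> x \<in> \<Omega> \<Longrightarrow> cc_env p x = p x"
  unfolding finite_cconcave_def c_concave_def cc_env_def by auto

lemma finite_cconcave_eq_preal: "p \<in> finite_cconcave \<Longrightarrow> x \<in> \<Omega> \<Longrightarrow> p x = ereal (preal p x)"
  using cc_env_eq[of p x] unfolding finite_cconcave_def preal_def by (cases "p x") auto

lemma ctrans_le_cc_env: "x \<in> \<Omega> \<Longrightarrow> ctrans \<Omega> c p x \<le> cc_env p x"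
  using cbartrans_ge[of x \<Omega> "ctrans \<Omega> c p" c x] c_diag[of x]
  unfolding cc_env_def by (simp add: zero_ereal_def[symmetric])

lemma cc_env_le: "x \<in> \<Omega> \<Longrightarrow> cc_env p x \<le> p x"
  unfolding cc_env_def by (rule cbartrans_ctrans_le)

lemma cc_env_shift_le:
  assumes "\<And>x. x \<in> \<Omega> \<Longrightarrow> p x \<le> p' x + ereal e"
  shows "cc_env p x \<le> cc_env p' x + ereal e"
  unfolding cc_env_def using assms by (intro cbartrans_shift_le ctrans_shift_le)

lemma cc_env_bounds:
  assumes p: "p \<in> finite_cconcave" and x0: "x0 \<in> \<Omega>" and x: "x \<in> closure \<Omega>"
  shows "cc_env p x \<le> p x0 + ereal cmax" "p x0 \<le> cc_env p x + ereal cmax"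
  using cbartrans_oscillation[OF x, of x0] cbartrans_oscillation[OF _ x, of x0] x0 closure_subset
  unfolding cc_env_eq[OF p x0, symmetric] cc_env_def by auto

lemma ctrans_bounds:
  assumes p: "p \<in> finite_cconcave" and x0: "x0 \<in> \<Omega>" and y: "y \<in> closure \<Omega>"
  shows "ctrans \<Omega> c p y \<le> p x0 + ereal cmax" "p x0 \<le> ctrans \<Omega> c p y + ereal cmax"
proof -
  have "ctrans \<Omega> c p y \<le> p x0 + ereal (c x0 y)" by (rule ctrans_le[OF x0])
  also have "\<dots> \<le> p x0 + ereal cmax"
    using cost_le_cmax[OF _ y, of x0] x0 closure_subset by (intro add_left_mono) auto
  finally show "ctrans \<Omega> c p y \<le> p x0 + ereal cmax" .
  show "p x0 \<le> ctrans \<Omega> c p y + ereal cmax"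
    unfolding ereal_minus_real_le_iff[symmetric] ctrans_def
  proof (rule INF_greatest)
    fix x assume x: "x \<in> \<Omega>"
    have "p x0 \<le> p x + ereal cmax"
      using cc_env_bounds(2)[OF p x0, of x] cc_env_eq[OF p x] x closure_subset by auto
    then have "p x0 - ereal cmax \<le> p x" by (simp add: ereal_minus_real_le_iff)
    also have "\<dots> \<le> p x + ereal (c x y)" using c_nonneg[of x y] by (simp add: add_increasing2)
    finally show "p x0 - ereal cmax \<le> p x + ereal (c x y)" .
  qed
qed

lemma preal:
  assumes p: "p \<in> finite_cconcave" and x0: "x0 \<in> \<Omega>" and x: "x \<in> closure \<Omega>"
  shows "cc_env p x = ereal (preal p x)" "\<bar>preal p x - preal p x0\<bar> \<le> cmax"
  using ereal_real_of_ereal_close[of "cc_env p x" "preal p x0" cmax] cc_env_bounds[OF p x0 x]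
  unfolding finite_cconcave_eq_preal[OF p x0] preal_def[of p x] by auto

lemma ctreal:
  assumes p: "p \<in> finite_cconcave" and x0: "x0 \<in> \<Omega>" and y: "y \<in> closure \<Omega>"
  shows "ctrans \<Omega> c p y = ereal (ctreal p y)" "\<bar>ctreal p y - preal p x0\<bar> \<le> cmax"
  using ereal_real_of_ereal_close[of "ctrans \<Omega> c p y" "preal p x0" cmax] ctrans_bounds[OF p x0 y]
  unfolding finite_cconcave_eq_preal[OF p x0] ctreal_def by auto

lemma preal_modulus:
  assumes p: "p \<in> finite_cconcave" and x: "x \<in> closure \<Omega>" and x': "x' \<in> closure \<Omega>"
    and e: "\<And>y. y \<in> \<Omega> \<Longrightarrow> \<bar>c x y - c x' y\<bar> \<le> e"
  shows "\<bar>preal p x - preal p x'\<bar> \<le> e"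
proof -
  obtain x0 where x0: "x0 \<in> \<Omega>" using nonempty_domain by blast
  have "c x' y \<le> c x y + e" "c x y \<le> c x' y + e" if "y \<in> \<Omega>" for y
    using e[OF that] unfolding abs_le_iff by linarith+
  then have "cc_env p x \<le> cc_env p x' + ereal e" "cc_env p x' \<le> cc_env p x + ereal e"
    unfolding cc_env_def by (blast intro: cbartrans_modulus)+
  then show ?thesis using preal(1)[OF p x0 x] preal(1)[OF p x0 x'] by (simp add: abs_le_iff)
qed

lemma ctreal_modulus:
  assumes p: "p \<in> finite_cconcave" and y: "y \<in> closure \<Omega>" and y': "y' \<in> closure \<Omega>"
    and e: "\<And>x. x \<in> \<Omega> \<Longrightarrow> \<bar>c x y - c x y'\<bar> \<le> e"
  shows "\<bar>ctreal p y - ctreal p y'\<bar> \<le> e"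
proof -
  obtain x0 where x0: "x0 \<in> \<Omega>" using nonempty_domain by blast
  have "c x y \<le> c x y' + e" "c x y' \<le> c x y + e" if "x \<in> \<Omega>" for x
    using e[OF that] unfolding abs_le_iff by linarith+
  then have "ctrans \<Omega> c p y \<le> ctrans \<Omega> c p y' + ereal e" "ctrans \<Omega> c p y' \<le> ctrans \<Omega> c p y + ereal e"
    by (blast intro: ctrans_modulus)+
  then show ?thesis using ctreal(1)[OF p x0 y] ctreal(1)[OF p x0 y'] by (simp add: abs_le_iff)
qed

lemma preal_equicontinuous:
  assumes e: "0 < e"
  obtains d where "0 < d" "\<And>p x x'. p \<in> finite_cconcave \<Longrightarrow> x \<in> closure \<Omega> \<Longrightarrow> x' \<in> closure \<Omega> \<Longrightarrow>
    dist x x' < d \<Longrightarrow> \<bar>preal p x - preal p x'\<bar> < e"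
proof -
  obtain d where d: "0 < d" "\<And>x x' y. x \<in> closure \<Omega> \<Longrightarrow> x' \<in> closure \<Omega> \<Longrightarrow> y \<in> closure \<Omega> \<Longrightarrow>
      dist x x' < d \<Longrightarrow> \<bar>c x y - c x' y\<bar> < e / 2"
    using cost_uniformly_continuous[of "e / 2"] e by auto
  show ?thesis
  proof (rule that[OF d(1)])
    fix p x x' assume p: "p \<in> finite_cconcave" and x: "x \<in> closure \<Omega>" "x' \<in> closure \<Omega>" "dist x x' < d"
    have "\<bar>preal p x - preal p x'\<bar> \<le> e / 2"
      using d(2)[OF x(1,2) _ x(3)] closure_subset by (intro preal_modulus[OF p x(1,2)]) (auto intro: less_imp_le)
    then show "\<bar>preal p x - preal p x'\<bar> < e" using e by simp
  qed
qed

lemma ctreal_equicontinuous: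
  assumes e: "0 < e"
  obtains d where "0 < d" "\<And>p y y'. p \<in> finite_cconcave \<Longrightarrow> y \<in> closure \<Omega> \<Longrightarrow> y' \<in> closure \<Omega> \<Longrightarrow>
    dist y y' < d \<Longrightarrow> \<bar>ctreal p y - ctreal p y'\<bar> < e"
proof -
  obtain d where d: "0 < d" "\<And>x x' y. x \<in> closure \<Omega> \<Longrightarrow> x' \<in> closure \<Omega> \<Longrightarrow> y \<in> closure \<Omega> \<Longrightarrow>
      dist x x' < d \<Longrightarrow> \<bar>c x y - c x' y\<bar> < e / 2"
    using cost_uniformly_continuous[of "e / 2"] e by auto
  show ?thesis
  proof (rule that[OF d(1)])
    fix p y y' assume p: "p \<in> finite_cconcave" and y: "y \<in> closure \<Omega>" "y' \<in> closure \<Omega>" "dist y y' < d"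
    have "\<bar>ctreal p y - ctreal p y'\<bar> \<le> e / 2"
      using d(2)[OF y(1,2) _ y(3)] closure_subset
      by (intro ctreal_modulus[OF p y(1,2)]) (auto simp: c_sym[of _ y] c_sym[of _ y'] intro: less_imp_le)
    then show "\<bar>ctreal p y - ctreal p y'\<bar> < e" using e by simp
  qed
qed

lemma continuous_on_preal:
  assumes "p \<in> finite_cconcave" shows "continuous_on (closure \<Omega>) (preal p)"
  unfolding continuous_on_iff
  by (metis assms dist_commute dist_real_def preal_equicontinuous)

lemma continuous_on_ctreal:
  assumes "p \<in> finite_cconcave" shows "continuous_on (closure \<Omega>) (ctreal p)"
  unfolding continuous_on_iff
  by (metis assms dist_commute dist_real_def ctreal_equicontinuous)

lemma cc_env_zero_finite: "cc_env (\<lambda>_. 0) \<in> finite_cconcave"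
  unfolding finite_cconcave_def
proof (intro CollectI conjI ballI)
  show "c_concave \<Omega> c (cc_env (\<lambda>_. 0))" unfolding cc_env_def by (rule c_concave_cbartrans_ctrans)
  fix x assume x: "x \<in> \<Omega>"
  show "cc_env (\<lambda>_. 0) x \<noteq> \<infinity>" using cc_env_le[OF x, of "\<lambda>_. 0"] by auto
  have "0 \<le> ctrans \<Omega> c (\<lambda>_. 0) x" unfolding ctrans_def by (rule INF_greatest) (simp add: c_nonneg)
  then show "cc_env (\<lambda>_. 0) x \<noteq> -\<infinity>" using ctrans_le_cc_env[OF x, of "\<lambda>_. 0"] by auto
qed

lemma cc_env_min:
  assumes p1: "p1 \<in> finite_cconcave" and p2: "p2 \<in> finite_cconcave"
    and q: "q = cc_env (\<lambda>x. min (p1 x) (p2 x))"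
  shows "q \<in> finite_cconcave"
    "\<And>x. x \<in> \<Omega> \<Longrightarrow> preal q x \<le> min (preal p1 x) (preal p2 x)"
    "\<And>y. y \<in> \<Omega> \<Longrightarrow> min (ctreal p1 y) (ctreal p2 y) \<le> ctreal q y"
proof -
  obtain x0 where x0: "x0 \<in> \<Omega>" using nonempty_domain by blast
  have ct: "min (ereal (ctreal p1 y)) (ereal (ctreal p2 y)) \<le> ctrans \<Omega> c q y" if "y \<in> \<Omega>" for y
  proof -
    have "min (ctrans \<Omega> c p1 y) (ctrans \<Omega> c p2 y) \<le> ctrans \<Omega> c (\<lambda>x. min (p1 x) (p2 x)) y"
      by (rule ctrans_min_ge)
    moreover have "y \<in> closure \<Omega>" using that closure_subset by blast
    ultimately show ?thesis
      using ctreal(1)[OF p1 x0] ctreal(1)[OF p2 x0]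
      unfolding q cc_env_def ctrans_cbartrans_ctrans[OF that] by simp
  qed
  have le: "q x \<le> ereal (min (preal p1 x) (preal p2 x))" if "x \<in> \<Omega>" for x
    using cc_env_le[OF that, of "\<lambda>x. min (p1 x) (p2 x)"]
    unfolding q finite_cconcave_eq_preal[OF p1 that] finite_cconcave_eq_preal[OF p2 that] by simp
  show q_fin: "q \<in> finite_cconcave"
    unfolding finite_cconcave_def
  proof (intro CollectI conjI ballI)
    show "c_concave \<Omega> c q" unfolding q cc_env_def by (rule c_concave_cbartrans_ctrans)
    fix x assume x: "x \<in> \<Omega>"
    show "q x \<noteq> \<infinity>" using le[OF x] by auto
    have "ctrans \<Omega> c q x \<le> q x"
      using ctrans_le_cc_env[OF x, of q] cc_env_le[OF x, of q] by simp
    then show "q x \<noteq> -\<infinity>" using ct[OF x] by (auto simp: min_def split: if_splits)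
  qed
  show "preal q x \<le> min (preal p1 x) (preal p2 x)" if "x \<in> \<Omega>" for x
    using le[OF that] finite_cconcave_eq_preal[OF q_fin that] by simp
  show "min (ctreal p1 y) (ctreal p2 y) \<le> ctreal q y" if "y \<in> \<Omega>" for y
    using ct[OF that] ctreal(1)[OF q_fin x0 closure_subset[THEN subsetD, OF that]]
    by (auto simp: min_def split: if_splits)
qed

lemma cc_env_max:
  assumes p1: "p1 \<in> finite_cconcave" and p2: "p2 \<in> finite_cconcave"
    and q: "q = cc_env (\<lambda>x. max (p1 x) (p2 x))"
  shows "q \<in> finite_cconcave"
    "\<And>x. x \<in> \<Omega> \<Longrightarrow> preal q x \<le> max (preal p1 x) (preal p2 x)"
    "\<And>y. y \<in> \<Omega> \<Longrightarrow> max (ctreal p1 y) (ctreal p2 y) \<le> ctreal q y"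
proof -
  obtain x0 where x0: "x0 \<in> \<Omega>" using nonempty_domain by blast
  have ct: "ctrans \<Omega> c p1 y \<le> ctrans \<Omega> c q y" "ctrans \<Omega> c p2 y \<le> ctrans \<Omega> c q y" if "y \<in> \<Omega>" for y
    unfolding q cc_env_def ctrans_cbartrans_ctrans[OF that] by (auto intro: ctrans_mono)
  have le: "q x \<le> ereal (max (preal p1 x) (preal p2 x))" if "x \<in> \<Omega>" for x
    using cc_env_le[OF that, of "\<lambda>x. max (p1 x) (p2 x)"]
    unfolding q finite_cconcave_eq_preal[OF p1 that] finite_cconcave_eq_preal[OF p2 that] by simp
  show q_fin: "q \<in> finite_cconcave"
    unfolding finite_cconcave_def
  proof (intro CollectI conjI ballI)
    show "c_concave \<Omega> c q" unfolding q cc_env_def by (rule c_concave_cbartrans_ctrans)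
    fix x assume x: "x \<in> \<Omega>"
    show "q x \<noteq> \<infinity>" by (metis le[OF x] ereal_infty_less_eq(1) PInfty_neq_ereal(1))
    have "ctrans \<Omega> c q x \<le> q x"
      using ctrans_le_cc_env[OF x, of q] cc_env_le[OF x, of q] by simp
    then show "q x \<noteq> -\<infinity>" using ct(1)[OF x] ctreal(1)[OF p1 x0 closure_subset[THEN subsetD, OF x]] by auto
  qed
  show "preal q x \<le> max (preal p1 x) (preal p2 x)" if "x \<in> \<Omega>" for x
    using le[OF that] finite_cconcave_eq_preal[OF q_fin that] by (auto simp: max_def split: if_splits)
  show "max (ctreal p1 y) (ctreal p2 y) \<le> ctreal q y" if "y \<in> \<Omega>" for y
    using ct[OF that] closure_subset[THEN subsetD, OF that]
      ctreal(1)[OF q_fin x0, of y] ctreal(1)[OF p1 x0, of y] ctreal(1)[OF p2 x0, of y] by auto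
qed

lemma finite_cconcave_uniform_limit:
  assumes q: "\<And>n. q n \<in> finite_cconcave"
    and lim: "\<And>e. 0 < e \<Longrightarrow> \<exists>n. \<forall>x\<in>\<Omega>. \<bar>preal (q n) x - g x\<bar> \<le> e"
  shows "(\<lambda>x. ereal (g x)) \<in> finite_cconcave"
proof -
  define p where "p x = ereal (g x)" for x
  have close: "\<exists>n. \<forall>x\<in>\<Omega>. q n x \<le> p x + ereal e \<and> p x \<le> q n x + ereal e" if e: "0 < e" for e
  proof -
    obtain n where "\<forall>x\<in>\<Omega>. \<bar>preal (q n) x - g x\<bar> \<le> e" using lim[OF e] by blast
    then have "\<forall>x\<in>\<Omega>. q n x \<le> p x + ereal e \<and> p x \<le> q n x + ereal e"
      by (auto simp: p_def finite_cconcave_eq_preal[OF q] abs_le_iff)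
    then show ?thesis ..
  qed
  have "cc_env p x = p x" if x: "x \<in> \<Omega>" for x
  proof (rule order_antisym)
    show "cc_env p x \<le> p x" by (rule cc_env_le[OF x])
    show "p x \<le> cc_env p x"
    proof (rule ereal_le_epsilon2)
      fix e :: real assume "0 < e"
      then obtain n where n: "\<forall>x\<in>\<Omega>. q n x \<le> p x + ereal (e/2) \<and> p x \<le> q n x + ereal (e/2)"
        using close[of "e/2"] by auto
      have "p x \<le> q n x + ereal (e/2)" using n x by blast
      also have "\<dots> = cc_env (q n) x + ereal (e/2)" using cc_env_eq[OF q x] by simp
      also have "\<dots> \<le> cc_env p x + ereal (e/2) + ereal (e/2)"
        using cc_env_shift_le[of "q n" p "e/2"] n by (intro add_right_mono) blast
      also have "\<dots> = cc_env p x + ereal e" by (simp add: add.assoc)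
      finally show "p x \<le> cc_env p x + ereal e" .
    qed
  qed
  then show ?thesis unfolding finite_cconcave_def c_concave_def cc_env_def p_def by auto
qed

lemma ctreal_diff_le:
  assumes p: "p \<in> finite_cconcave" and q: "q \<in> finite_cconcave" and y: "y \<in> closure \<Omega>"
    and e: "\<And>x. x \<in> \<Omega> \<Longrightarrow> \<bar>preal p x - preal q x\<bar> \<le> e"
  shows "\<bar>ctreal p y - ctreal q y\<bar> \<le> e"
proof -
  obtain x0 where x0: "x0 \<in> \<Omega>" using nonempty_domain by blast
  have "p x \<le> q x + ereal e" "q x \<le> p x + ereal e" if "x \<in> \<Omega>" for x
    using e[OF that] unfolding finite_cconcave_eq_preal[OF p that] finite_cconcave_eq_preal[OF q that]
    by (simp_all add: abs_le_iff)
  then have "ctrans \<Omega> c p y \<le> ctrans \<Omega> c q y + ereal e" "ctrans \<Omega> c q y \<le> ctrans \<Omega> c p y + ereal e"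
    by (blast intro: ctrans_shift_le)+
  then show ?thesis using ctreal(1)[OF p x0 y] ctreal(1)[OF q x0 y] by (simp add: abs_le_iff)
qed

lemma finite_cconcave_uniform_subseq:
  fixes ps :: "nat \<Rightarrow> 'a \<Rightarrow> ereal"
  assumes ps: "\<And>n. ps n \<in> finite_cconcave" and bd: "\<And>n x. x \<in> closure \<Omega> \<Longrightarrow> \<bar>preal (ps n) x\<bar> \<le> B"
  obtains r :: "nat \<Rightarrow> nat" and p where "strict_mono r" "p \<in> finite_cconcave"
    "\<And>e. 0 < e \<Longrightarrow> \<exists>N. \<forall>n\<ge>N. \<forall>x\<in>\<Omega>. \<bar>preal (ps (r n)) x - preal p x\<bar> \<le> e"
proof -
  have bd': "norm (preal (ps n) x) \<le> B" if "x \<in> closure \<Omega>" for n x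
    using bd[OF that] by simp
  have equicont: "\<exists>d. 0 < d \<and> (\<forall>n y. y \<in> closure \<Omega> \<and> norm (x - y) < d \<longrightarrow>
      norm (preal (ps n) x - preal (ps n) y) < e)"
    if "x \<in> closure \<Omega>" "0 < e" for x e
  proof -
    obtain d where "0 < d" "\<And>p x x'. p \<in> finite_cconcave \<Longrightarrow> x \<in> closure \<Omega> \<Longrightarrow> x' \<in> closure \<Omega> \<Longrightarrow>
        dist x x' < d \<Longrightarrow> \<bar>preal p x - preal p x'\<bar> < e"
      using preal_equicontinuous[OF \<open>0 < e\<close>] by blast
    then show ?thesis using ps that(1) by (auto simp: dist_norm)
  qed
  obtain g and r :: "nat \<Rightarrow> nat" where g: "continuous_on (closure \<Omega>) g" "strict_mono r"
    "\<And>e. 0 < e \<Longrightarrow> \<exists>N. \<forall>n x. N \<le> n \<and> x \<in> closure \<Omega> \<longrightarrow> norm (preal (ps (r n)) x - g x) < e"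
  proof (rule Arzela_Ascoli[OF compact_closure_domain bd' equicont])
    fix g and k :: "nat \<Rightarrow> nat"
    assume "continuous_on (closure \<Omega>) g" "strict_mono k"
      "\<And>e. 0 < e \<Longrightarrow> \<exists>N. \<forall>n x. N \<le> n \<and> x \<in> closure \<Omega> \<longrightarrow> norm (preal (ps (k n)) x - g x) < e"
    then show thesis by (rule that)
  qed
  have unif: "\<exists>N. \<forall>n\<ge>N. \<forall>x\<in>\<Omega>. \<bar>preal (ps (r n)) x - g x\<bar> \<le> e" if e: "0 < e" for e
  proof -
    obtain N where N: "\<forall>n x. N \<le> n \<and> x \<in> closure \<Omega> \<longrightarrow> norm (preal (ps (r n)) x - g x) < e"
      using g(3)[OF e] by blast
    have "\<bar>preal (ps (r n)) x - g x\<bar> \<le> e" if "N \<le> n" "x \<in> \<Omega>" for n x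
      using N[rule_format, of n x] that(1) closure_subset[THEN subsetD, OF that(2)] by simp
    then show ?thesis by blast
  qed
  have p: "(\<lambda>x. ereal (g x)) \<in> finite_cconcave"
    using unif ps by (intro finite_cconcave_uniform_limit[of "\<lambda>n. ps (r n)"]) blast+
  have "preal (\<lambda>x. ereal (g x)) x = g x" if "x \<in> \<Omega>" for x
    using finite_cconcave_eq_preal[OF p that] by simp
  with unif show ?thesis by (intro that[of r "\<lambda>x. ereal (g x)"] g(2) p) auto
qed

end

section \<open>The dual problem\<close>

locale dual_problem = admissible_integrand \<Omega> s + cost_on_domain \<Omega> c
  for \<Omega> :: "'a::euclidean_space set" and s c +
  fixes \<rho> :: "'a \<Rightarrow> real"
  assumes open_domain: "open \<Omega>" and rho_X: "\<rho> \<in> Xspace \<Omega> s" and rho_N: "condN \<Omega> s \<rho>"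
begin

abbreviation "\<mu> \<equiv> lebesgue_on \<Omega>"

lemma domain_sets: "\<Omega> \<in> sets lebesgue"
  using open_domain by (simp add: borel_open)

lemma finite_measure_domain: "finite_measure \<mu>"
  using bounded_set_imp_lmeasurable[OF bounded_domain domain_sets] by (rule finite_measure_lebesgue_on)

lemma integrable_bounded:
  fixes f :: "'a \<Rightarrow> real"
  assumes "f \<in> borel_measurable \<mu>" "\<And>x. x \<in> \<Omega> \<Longrightarrow> \<bar>f x\<bar> \<le> B"
  shows "integrable \<mu> f"
  using assms by (intro finite_measure.integrable_const_bound[OF finite_measure_domain, of _ B] AE_I2) auto

lemma measurable_continuous_on_closure:
  "continuous_on (closure \<Omega>) f \<Longrightarrow> f \<in> borel_measurable \<mu>"
  by (rule continuous_imp_measurable_on_sets_lebesgue[OF continuous_on_subset[OF _ closure_subset] domain_sets])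

lemma integrable_rho: "integrable \<mu> \<rho>" using rho_X unfolding Xspace_def by auto

lemma measurable_rho: "\<rho> \<in> borel_measurable \<mu>" using integrable_rho by (rule borel_measurable_integrable)

lemma integrable_rho_mult_bounded:
  fixes f :: "'a \<Rightarrow> real"
  assumes "f \<in> borel_measurable \<mu>" "\<And>x. x \<in> \<Omega> \<Longrightarrow> \<bar>f x\<bar> \<le> B"
  shows "integrable \<mu> (\<lambda>x. \<rho> x * f x)"
proof (rule Bochner_Integration.integrable_bound)
  show "integrable \<mu> (\<lambda>x. B * \<rho> x)" using integrable_rho by simp
  show "(\<lambda>x. \<rho> x * f x) \<in> borel_measurable \<mu>" using measurable_rho assms(1) by measurable
  show "AE x in \<mu>. norm (\<rho> x * f x) \<le> norm (B * \<rho> x)"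
  proof (rule AE_I2)
    fix x assume "x \<in> space \<mu>"
    then have "\<bar>\<rho> x\<bar> * \<bar>f x\<bar> \<le> \<bar>\<rho> x\<bar> * \<bar>B\<bar>" using assms(2) by (intro mult_left_mono) force+
    then show "norm (\<rho> x * f x) \<le> norm (B * \<rho> x)" by (simp add: abs_mult mult.commute)
  qed
qed

lemma rho_nonneg_AE: "AE x in \<mu>. 0 \<le> \<rho> x"
proof -
  define f where "f x = s (\<rho> x) x" for x
  obtain m where m: "\<And>x z. x \<in> \<Omega> \<Longrightarrow> ereal m \<le> s z x" using s_bounded_below by blast
  have "(\<integral>\<^sup>+ x. e2ennreal (- f x) \<partial>\<mu>) \<le> (\<integral>\<^sup>+ x. ennreal \<bar>m\<bar> \<partial>\<mu>)"
  proof (rule nn_integral_mono)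
    fix x assume "x \<in> space \<mu>"
    then have "ereal m \<le> f x" using m[of x "\<rho> x"] unfolding f_def by simp
    then have "- f x \<le> ereal \<bar>m\<bar>" by (cases "f x") auto
    then show "e2ennreal (- f x) \<le> ennreal \<bar>m\<bar>" using e2ennreal_mono by fastforce
  qed
  also have "\<dots> < \<infinity>"
    using finite_measure.emeasure_finite[OF finite_measure_domain, of \<Omega>]
    by (simp add: ennreal_mult_less_top top.not_eq_extremum)
  moreover have "Efun \<Omega> s \<rho> = enn2ereal (\<integral>\<^sup>+ x. e2ennreal (f x) \<partial>\<mu>) - enn2ereal (\<integral>\<^sup>+ x. e2ennreal (- f x) \<partial>\<mu>)"
    unfolding Efun_def eint_def f_def ..
  ultimately have "(\<integral>\<^sup>+ x. e2ennreal (f x) \<partial>\<mu>) \<noteq> \<infinity>"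
    using rho_X unfolding Xspace_def by (auto simp: enn2ereal_eq_ereal_enn2real)
  moreover have "(\<lambda>x. e2ennreal (f x)) \<in> borel_measurable \<mu>"
    unfolding f_def by (rule measurable_compose[OF measurable_s_comp[OF measurable_rho] measurable_e2ennreal])
  ultimately have "AE x in \<mu>. e2ennreal (f x) \<noteq> \<infinity>" using nn_integral_PInf_AE by blast
  then show ?thesis
  proof (rule AE_mp, intro AE_I2 impI)
    fix x assume "x \<in> space \<mu>" "e2ennreal (f x) \<noteq> \<infinity>"
    then show "0 \<le> \<rho> x" using s_neg[of x "\<rho> x"] unfolding f_def by (cases "\<rho> x < 0") auto
  qed
qed

definition mass :: real where "mass = integral\<^sup>L \<mu> \<rho>"

lemma mass_pos: "0 < mass" using rho_N unfolding condN_def mass_def by auto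

lemma positive_rho_set:
  "{x \<in> \<Omega>. 0 < \<rho> x} \<in> sets \<mu>" "0 < emeasure \<mu> {x \<in> \<Omega>. 0 < \<rho> x}"
  using positive_measure_if_integral_pos[OF integrable_rho rho_nonneg_AE] mass_pos
  unfolding mass_def by auto

text \<open>Condition (N) yields a level b_N at which the slopes of s* carry more mass than \<rho>. The
  increment slope_weight of s* over [b_N, b_N + 1] minorizes these slopes beyond b_N + 1; it makes
  the dual value decrease for large p and keeps p = +\<infinity> out of X*.\<close>
definition b_N :: real where "b_N = (SOME b. ereal mass < capacity b)"

lemma mass_less_capacity_b_N: "ereal mass < capacity b_N"
proof -
  have "ereal mass < (SUP b. capacity b)"
    using rho_N Lim_capacity unfolding condN_def mass_def capacity_def by simp
  then have "\<exists>b. ereal mass < capacity b" by (auto simp: less_SUP_iff)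
  then show ?thesis unfolding b_N_def by (rule someI_ex)
qed

definition slope_weight :: "'a \<Rightarrow> real" where "slope_weight x = sstar_real (b_N + 1) x - sstar_real b_N x"

lemma slope_weight_bounds:
  assumes x: "x \<in> \<Omega>" shows "max_subgrad b_N x \<le> slope_weight x" "slope_weight x \<le> max_subgrad (b_N + 1) x"
  using max_subgrad_le[OF x, of b_N "b_N + 1"] max_subgrad_le[OF x, of "b_N + 1" b_N] unfolding slope_weight_def by simp_all

lemma slope_weight_nonneg: "x \<in> \<Omega> \<Longrightarrow> 0 \<le> slope_weight x"
  using slope_weight_bounds(1) max_subgrad_nonneg by (metis order_trans)

lemma integrable_slope_weight: "integrable \<mu> slope_weight"
proof -
  obtain K where K: "\<And>x t. x \<in> \<Omega> \<Longrightarrow> t \<le> b_N + 1 \<Longrightarrow> \<bar>sstar_real t x\<bar> \<le> K"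
    using sstar_real_bounded by blast
  show ?thesis
  proof (rule integrable_bounded)
    show "slope_weight \<in> borel_measurable \<mu>"
      unfolding slope_weight_def[abs_def]
      using measurable_sstar_real_comp[of "\<lambda>_. b_N + 1"] measurable_sstar_real_comp[of "\<lambda>_. b_N"] by measurable
    show "\<bar>slope_weight x\<bar> \<le> K" if "x \<in> \<Omega>" for x
      using K[OF that, of "b_N + 1"] slope_weight_nonneg[OF that] sstar_real_nonneg[OF that, of b_N] unfolding slope_weight_def by simp
  qed
qed

definition slope_mass :: real where "slope_mass = integral\<^sup>L \<mu> slope_weight"

lemma mass_less_slope_mass: "mass < slope_mass"
proof -
  have slope_mass_nonneg: "0 \<le> slope_mass" unfolding slope_mass_def by (rule integral_nonneg_AE) (rule AE_I2, simp add: slope_weight_nonneg)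
  have "ennreal slope_mass = (\<integral>\<^sup>+ x. ennreal (slope_weight x) \<partial>\<mu>)"
    unfolding slope_mass_def by (rule nn_integral_eq_integral[symmetric, OF integrable_slope_weight]) (rule AE_I2, simp add: slope_weight_nonneg)
  also have "\<dots> \<ge> (\<integral>\<^sup>+ x. ennreal (max_subgrad b_N x) \<partial>\<mu>)"
    by (intro nn_integral_mono ennreal_leI) (simp add: slope_weight_bounds)
  finally have "capacity b_N \<le> ereal slope_mass"
    unfolding capacity_eq using slope_mass_nonneg by (simp add: less_eq_ennreal.rep_eq)
  then have "ereal mass < ereal slope_mass" using mass_less_capacity_b_N by (meson less_le_trans)
  then show ?thesis by simp
qed

lemma slope_weight_le_sstar_real:
  assumes x: "x \<in> \<Omega>" and t: "b_N + 1 \<le> t"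
  shows "(t - (b_N + 1)) * slope_weight x \<le> sstar_real t x"
proof -
  have "(t - (b_N + 1)) * slope_weight x \<le> max_subgrad (b_N + 1) x * (t - (b_N + 1))"
    using mult_left_mono[OF slope_weight_bounds(2)[OF x], of "t - (b_N + 1)"] t by (simp add: mult.commute)
  then show ?thesis using max_subgrad_le[OF x, of "b_N + 1" t] sstar_real_nonneg[OF x, of "b_N + 1"] by simp
qed

lemma positive_slope_weight_set: "{x \<in> \<Omega>. 0 < slope_weight x} \<in> sets \<mu>" "0 < emeasure \<mu> {x \<in> \<Omega>. 0 < slope_weight x}"
  using positive_measure_if_integral_pos[OF integrable_slope_weight AE_I2] slope_weight_nonneg mass_less_slope_mass mass_pos
  unfolding slope_mass_def by auto

lemma measurable_preal: "p \<in> finite_cconcave \<Longrightarrow> preal p \<in> borel_measurable \<mu>"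
  by (rule measurable_continuous_on_closure[OF continuous_on_preal])

lemma measurable_ctreal: "p \<in> finite_cconcave \<Longrightarrow> ctreal p \<in> borel_measurable \<mu>"
  by (rule measurable_continuous_on_closure[OF continuous_on_ctreal])

lemma preal_bounded:
  "p \<in> finite_cconcave \<Longrightarrow> x0 \<in> \<Omega> \<Longrightarrow> x \<in> closure \<Omega> \<Longrightarrow> \<bar>preal p x\<bar> \<le> \<bar>preal p x0\<bar> + cmax"
  using preal(2)[of p x0 x] by auto

lemma ctreal_bounded:
  "p \<in> finite_cconcave \<Longrightarrow> x0 \<in> \<Omega> \<Longrightarrow> y \<in> closure \<Omega> \<Longrightarrow> \<bar>ctreal p y\<bar> \<le> \<bar>preal p x0\<bar> + cmax"
  using ctreal(2)[of p x0 y] by auto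

lemma integrable_preal:
  assumes p: "p \<in> finite_cconcave" shows "integrable \<mu> (preal p)"
proof -
  obtain x0 where "x0 \<in> \<Omega>" using nonempty_domain by blast
  then show ?thesis
    using preal_bounded[OF p] closure_subset by (intro integrable_bounded[OF measurable_preal[OF p]]) blast
qed

lemma integrable_rho_ctreal:
  assumes p: "p \<in> finite_cconcave" shows "integrable \<mu> (\<lambda>y. \<rho> y * ctreal p y)"
proof -
  obtain x0 where "x0 \<in> \<Omega>" using nonempty_domain by blast
  then show ?thesis
    using ctreal_bounded[OF p] closure_subset
    by (intro integrable_rho_mult_bounded[OF measurable_ctreal[OF p]]) blast
qed

lemma integrable_sstar_preal:
  assumes p: "p \<in> finite_cconcave" shows "integrable \<mu> (\<lambda>x. sstar_real (preal p x) x)"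
proof -
  obtain x0 where x0: "x0 \<in> \<Omega>" using nonempty_domain by blast
  obtain K where K: "\<And>x t. x \<in> \<Omega> \<Longrightarrow> t \<le> \<bar>preal p x0\<bar> + cmax \<Longrightarrow> \<bar>sstar_real t x\<bar> \<le> K"
    using sstar_real_bounded by blast
  show ?thesis
  proof (rule integrable_bounded)
    show "(\<lambda>x. sstar_real (preal p x) x) \<in> borel_measurable \<mu>"
      by (rule measurable_sstar_real_comp[OF measurable_preal[OF p]])
    show "\<bar>sstar_real (preal p x) x\<bar> \<le> K" if "x \<in> \<Omega>" for x
      using K[OF that] preal_bounded[OF p x0 closure_subset[THEN subsetD, OF that]] by simp
  qed
qed

definition dual_value :: "('a \<Rightarrow> ereal) \<Rightarrow> real" where
  "dual_value p = (\<integral>y. \<rho> y * ctreal p y \<partial>\<mu>) - (\<integral>x. sstar_real (preal p x) x \<partial>\<mu>)"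

lemma Estar_finite_cconcave:
  assumes p: "p \<in> finite_cconcave"
  shows "Estar \<Omega> s p = ereal (\<integral>x. sstar_real (preal p x) x \<partial>\<mu>)"
proof -
  have "Estar \<Omega> s p = eint \<mu> (\<lambda>x. ereal (sstar_real (preal p x) x))"
    unfolding Estar_def by (rule eint_cong) (simp add: finite_cconcave_eq_preal[OF p] sstar_eq_sstar_real)
  also have "\<dots> = ereal (\<integral>x. sstar_real (preal p x) x \<partial>\<mu>)"
    by (rule eint_ereal_eq_integral[OF integrable_sstar_preal[OF p]])
  finally show ?thesis .
qed

lemma Jstar_finite_cconcave:
  assumes p: "p \<in> finite_cconcave" shows "Jstar \<Omega> s c p \<rho> = ereal (dual_value p)"
proof -
  obtain x0 where x0: "x0 \<in> \<Omega>" using nonempty_domain by blast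
  have "eint \<mu> (\<lambda>y. ereal (\<rho> y) * ctrans \<Omega> c p y) = eint \<mu> (\<lambda>y. ereal (\<rho> y * ctreal p y))"
    by (rule eint_cong) (simp add: ctreal(1)[OF p x0] closure_subset[THEN subsetD])
  also have "\<dots> = ereal (\<integral>y. \<rho> y * ctreal p y \<partial>\<mu>)"
    by (rule eint_ereal_eq_integral[OF integrable_rho_ctreal[OF p]])
  finally show ?thesis unfolding Jstar_def Estar_finite_cconcave[OF p] dual_value_def by simp
qed

lemma finite_cconcave_Xstar:
  assumes p: "p \<in> finite_cconcave" shows "p \<in> Xstar \<Omega> s"
proof -
  have "(\<lambda>x. ereal (preal p x)) \<in> borel_measurable \<mu>" using measurable_preal[OF p] by measurable
  then have "p \<in> borel_measurable \<mu>"
    by (rule measurable_cong[THEN iffD1, rotated]) (simp add: finite_cconcave_eq_preal[OF p])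
  then show ?thesis unfolding Xstar_def using Estar_finite_cconcave[OF p] by simp
qed

lemma Jstar_MInf:
  assumes q: "\<forall>x\<in>\<Omega>. q x = -\<infinity>" shows "Jstar \<Omega> s c q \<rho> = -\<infinity>"
proof -
  obtain x0 where x0: "x0 \<in> \<Omega>" using nonempty_domain by blast
  have ct: "ctrans \<Omega> c q y = -\<infinity>" for y
    using ctrans_le[OF x0, of c q y] q x0 by simp
  define A where "A = {x \<in> \<Omega>. 0 < \<rho> x}"
  have pos: "(\<integral>\<^sup>+ y. e2ennreal (ereal (\<rho> y) * ctrans \<Omega> c q y) \<partial>\<mu>) = (\<integral>\<^sup>+ y. 0 \<partial>\<mu>)"
    using rho_nonneg_AE
    by (intro nn_integral_cong_AE, elim AE_mp, intro AE_I2 impI) (auto simp: ct less_le intro: e2ennreal_neg)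
  have "(\<integral>\<^sup>+ y. top * indicator A y \<partial>\<mu>) \<le> (\<integral>\<^sup>+ y. e2ennreal (- (ereal (\<rho> y) * ctrans \<Omega> c q y)) \<partial>\<mu>)"
    by (intro nn_integral_mono) (auto simp: ct A_def indicator_def e2ennreal_infty)
  moreover have "(\<integral>\<^sup>+ y. top * indicator A y \<partial>\<mu>) = top"
    using nn_integral_cmult_indicator[OF positive_rho_set(1), of top] positive_rho_set(2)
    unfolding A_def by (simp add: ennreal_top_mult)
  ultimately have neg: "(\<integral>\<^sup>+ y. e2ennreal (- (ereal (\<rho> y) * ctrans \<Omega> c q y)) \<partial>\<mu>) = top"
    by (simp add: top_unique)
  have "eint \<mu> (\<lambda>y. ereal (\<rho> y) * ctrans \<Omega> c q y) = -\<infinity>"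
    unfolding eint_def pos neg by (simp add: zero_ennreal.rep_eq top_ennreal.rep_eq)
  then show ?thesis unfolding Jstar_def using Estar_nonneg[of q] by (cases "Estar \<Omega> s q") auto
qed

lemma PInf_notin_Xstar:
  assumes q: "\<forall>x\<in>\<Omega>. q x = \<infinity>" shows "q \<notin> Xstar \<Omega> s"
proof -
  define A where "A = {x \<in> \<Omega>. 0 < slope_weight x}"
  have "sstar s \<infinity> x = \<infinity>" if "x \<in> A" for x
    using that slope_weight_le_sstar_real[of x "b_N + 2"] by (intro sstar_PInf[of x "b_N + 2"]) (auto simp: A_def)
  then have "(\<integral>\<^sup>+ y. top * indicator A y \<partial>\<mu>) \<le> (\<integral>\<^sup>+ x. e2ennreal (sstar s (q x) x) \<partial>\<mu>)"
    using q by (intro nn_integral_mono) (auto simp: A_def indicator_def e2ennreal_infty)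
  moreover have "(\<integral>\<^sup>+ y. top * indicator A y \<partial>\<mu>) = top"
    using nn_integral_cmult_indicator[OF positive_slope_weight_set(1), of top] positive_slope_weight_set(2)
    unfolding A_def by (simp add: ennreal_top_mult)
  ultimately have "(\<integral>\<^sup>+ x. e2ennreal (sstar s (q x) x) \<partial>\<mu>) = top" by (simp add: top_unique)
  then have "Estar \<Omega> s q = \<infinity>"
    unfolding Estar_def by (subst eint_nonneg_eq_nn_integral) (simp_all add: sstar_nonneg top_ennreal.rep_eq)
  then show ?thesis unfolding Xstar_def by simp
qed

lemma integral_rho_ctreal_le:
  assumes p: "p \<in> finite_cconcave" and x0: "x0 \<in> \<Omega>"
  shows "(\<integral>y. \<rho> y * ctreal p y \<partial>\<mu>) \<le> (preal p x0 + cmax) * mass"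
proof -
  have "(\<integral>y. \<rho> y * ctreal p y \<partial>\<mu>) \<le> (\<integral>y. \<rho> y * (preal p x0 + cmax) \<partial>\<mu>)"
  proof (rule integral_mono_AE[OF integrable_rho_ctreal[OF p]])
    show "integrable \<mu> (\<lambda>y. \<rho> y * (preal p x0 + cmax))" using integrable_rho by simp
    show "AE y in \<mu>. \<rho> y * ctreal p y \<le> \<rho> y * (preal p x0 + cmax)"
      using rho_nonneg_AE
    proof (rule AE_mp, intro AE_I2 impI)
      fix y assume "y \<in> space \<mu>" "0 \<le> \<rho> y"
      then show "\<rho> y * ctreal p y \<le> \<rho> y * (preal p x0 + cmax)"
        using ctreal(2)[OF p x0 closure_subset[THEN subsetD, of y]] by (intro mult_left_mono) auto
    qed
  qed
  then show ?thesis unfolding mass_def by (simp add: mult.commute)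
qed

lemma dual_value_le:
  assumes p: "p \<in> finite_cconcave" and x0: "x0 \<in> \<Omega>"
  shows "dual_value p \<le> (preal p x0 + cmax) * mass"
proof -
  have "0 \<le> (\<integral>x. sstar_real (preal p x) x \<partial>\<mu>)"
    by (rule integral_nonneg_AE) (rule AE_I2, simp add: sstar_real_nonneg)
  then show ?thesis using integral_rho_ctreal_le[OF p x0] unfolding dual_value_def by simp
qed

text \<open>For large p, s*(p) grows at least like (p - b_N - 1) slope_weight, and slope_mass > mass.\<close>
lemma dual_value_le_large:
  assumes p: "p \<in> finite_cconcave" and x0: "x0 \<in> \<Omega>" and large: "b_N + 1 \<le> preal p x0 - cmax"
  shows "dual_value p \<le> (preal p x0 + cmax) * mass - (preal p x0 - cmax - (b_N + 1)) * slope_mass"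
proof -
  have "(\<integral>x. (preal p x0 - cmax - (b_N + 1)) * slope_weight x \<partial>\<mu>) \<le> (\<integral>x. sstar_real (preal p x) x \<partial>\<mu>)"
  proof (rule integral_mono[OF _ integrable_sstar_preal[OF p]])
    show "integrable \<mu> (\<lambda>x. (preal p x0 - cmax - (b_N + 1)) * slope_weight x)" using integrable_slope_weight by simp
    fix x assume "x \<in> space \<mu>"
    then have x: "x \<in> \<Omega>" by simp
    have "preal p x0 - cmax \<le> preal p x" using preal(2)[OF p x0 closure_subset[THEN subsetD, OF x]] by auto
    then have "sstar_real (preal p x0 - cmax) x \<le> sstar_real (preal p x) x" by (rule sstar_real_mono[OF x])
    then show "(preal p x0 - cmax - (b_N + 1)) * slope_weight x \<le> sstar_real (preal p x) x"
      using slope_weight_le_sstar_real[OF x large] by simp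
  qed
  then show ?thesis
    using integral_rho_ctreal_le[OF p x0] unfolding dual_value_def slope_mass_def by simp
qed

lemma dual_value_bounded_above:
  assumes p: "p \<in> finite_cconcave" shows "dual_value p \<le> (b_N + 1 + 2 * cmax) * mass"
proof -
  obtain x0 where x0: "x0 \<in> \<Omega>" using nonempty_domain by blast
  show ?thesis
  proof (cases "b_N + 1 \<le> preal p x0 - cmax")
    case True
    have "dual_value p \<le> (preal p x0 + cmax) * mass - (preal p x0 - cmax - (b_N + 1)) * slope_mass"
      by (rule dual_value_le_large[OF p x0 True])
    also have "\<dots> = preal p x0 * (mass - slope_mass) + cmax * mass + (cmax + b_N + 1) * slope_mass"
      by (simp add: algebra_simps)
    also have "\<dots> \<le> (b_N + 1 + cmax) * (mass - slope_mass) + cmax * mass + (cmax + b_N + 1) * slope_mass"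
      using True mass_less_slope_mass by (intro add_right_mono mult_right_mono_neg) auto
    also have "\<dots> = (b_N + 1 + 2 * cmax) * mass" by (simp add: algebra_simps)
    finally show ?thesis .
  next
    case False
    have "dual_value p \<le> (preal p x0 + cmax) * mass" by (rule dual_value_le[OF p x0])
    also have "\<dots> \<le> (b_N + 1 + 2 * cmax) * mass" using False mass_pos by (intro mult_right_mono) auto
    finally show ?thesis .
  qed
qed

definition coercivity_bound :: "real \<Rightarrow> real" where
  "coercivity_bound L = \<bar>L / mass - cmax\<bar>
     + \<bar>max (b_N + 1 + cmax) ((cmax * mass + (cmax + b_N + 1) * slope_mass - L) / (slope_mass - mass))\<bar> + cmax"

lemma preal_le_coercivity_bound:
  assumes p: "p \<in> finite_cconcave" and L: "L \<le> dual_value p" and x: "x \<in> closure \<Omega>"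
  shows "\<bar>preal p x\<bar> \<le> coercivity_bound L"
proof -
  obtain x0 where x0: "x0 \<in> \<Omega>" using nonempty_domain by blast
  define t where "t = preal p x0"
  have "L \<le> (t + cmax) * mass" using dual_value_le[OF p x0] L unfolding t_def by simp
  then have "L / mass \<le> t + cmax" using mass_pos by (simp add: divide_le_eq)
  then have lower: "L / mass - cmax \<le> t" by simp
  have upper: "t \<le> max (b_N + 1 + cmax) ((cmax * mass + (cmax + b_N + 1) * slope_mass - L) / (slope_mass - mass))"
  proof (cases "b_N + 1 \<le> t - cmax")
    case True
    have "L \<le> (t + cmax) * mass - (t - cmax - (b_N + 1)) * slope_mass"
      using dual_value_le_large[OF p x0] True L unfolding t_def by fastforce
    then have "t * (slope_mass - mass) \<le> cmax * mass + (cmax + b_N + 1) * slope_mass - L" by (simp add: algebra_simps)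
    then have "t \<le> (cmax * mass + (cmax + b_N + 1) * slope_mass - L) / (slope_mass - mass)"
      using mass_less_slope_mass by (simp add: le_divide_eq)
    then show ?thesis by simp
  qed simp
  have "\<bar>preal p x - t\<bar> \<le> cmax" using preal(2)[OF p x0 x] unfolding t_def .
  then show ?thesis unfolding coercivity_bound_def using lower upper by linarith
qed

context
  fixes p1 p2 :: "'a \<Rightarrow> ereal"
  assumes p1: "p1 \<in> finite_cconcave" and p2: "p2 \<in> finite_cconcave"
begin

lemma integral_rho_ctreal_min_max:
  "(\<integral>y. \<rho> y * ctreal p1 y \<partial>\<mu>) + (\<integral>y. \<rho> y * ctreal p2 y \<partial>\<mu>) \<le>
    (\<integral>y. \<rho> y * ctreal (cc_env (\<lambda>x. min (p1 x) (p2 x))) y \<partial>\<mu>)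
    + (\<integral>y. \<rho> y * ctreal (cc_env (\<lambda>x. max (p1 x) (p2 x))) y \<partial>\<mu>)"
proof -
  note q1 = cc_env_min[OF p1 p2 refl] and q2 = cc_env_max[OF p1 p2 refl]
  let ?q1 = "cc_env (\<lambda>x. min (p1 x) (p2 x))" and ?q2 = "cc_env (\<lambda>x. max (p1 x) (p2 x))"
  have "(\<integral>y. \<rho> y * ctreal p1 y + \<rho> y * ctreal p2 y \<partial>\<mu>) \<le> (\<integral>y. \<rho> y * ctreal ?q1 y + \<rho> y * ctreal ?q2 y \<partial>\<mu>)"
  proof (rule integral_mono_AE)
    show "integrable \<mu> (\<lambda>y. \<rho> y * ctreal p1 y + \<rho> y * ctreal p2 y)"
      using integrable_rho_ctreal[OF p1] integrable_rho_ctreal[OF p2] by simp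
    show "integrable \<mu> (\<lambda>y. \<rho> y * ctreal ?q1 y + \<rho> y * ctreal ?q2 y)"
      using integrable_rho_ctreal[OF q1(1)] integrable_rho_ctreal[OF q2(1)] by simp
    show "AE y in \<mu>. \<rho> y * ctreal p1 y + \<rho> y * ctreal p2 y \<le> \<rho> y * ctreal ?q1 y + \<rho> y * ctreal ?q2 y"
      using rho_nonneg_AE
    proof (rule AE_mp, intro AE_I2 impI)
      fix y assume "y \<in> space \<mu>" "0 \<le> \<rho> y"
      moreover have "ctreal p1 y + ctreal p2 y \<le> ctreal ?q1 y + ctreal ?q2 y"
        using q1(3)[of y] q2(3)[of y] \<open>y \<in> space \<mu>\<close> by (simp add: min_def max_def split: if_splits)
      ultimately show "\<rho> y * ctreal p1 y + \<rho> y * ctreal p2 y \<le> \<rho> y * ctreal ?q1 y + \<rho> y * ctreal ?q2 y"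
        by (simp add: mult_left_mono flip: distrib_left)
    qed
  qed
  then show ?thesis
    using integrable_rho_ctreal[OF p1] integrable_rho_ctreal[OF p2] integrable_rho_ctreal[OF q1(1)]
      integrable_rho_ctreal[OF q2(1)] by simp
qed

lemma integral_sstar_preal_min_max:
  "(\<integral>x. sstar_real (preal (cc_env (\<lambda>x. min (p1 x) (p2 x))) x) x \<partial>\<mu>)
    + (\<integral>x. sstar_real (preal (cc_env (\<lambda>x. max (p1 x) (p2 x))) x) x \<partial>\<mu>) \<le>
    (\<integral>x. sstar_real (preal p1 x) x \<partial>\<mu>) + (\<integral>x. sstar_real (preal p2 x) x \<partial>\<mu>)"
proof -
  note q1 = cc_env_min[OF p1 p2 refl] and q2 = cc_env_max[OF p1 p2 refl]
  let ?q1 = "cc_env (\<lambda>x. min (p1 x) (p2 x))" and ?q2 = "cc_env (\<lambda>x. max (p1 x) (p2 x))"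
  have "(\<integral>x. sstar_real (preal ?q1 x) x + sstar_real (preal ?q2 x) x \<partial>\<mu>)
      \<le> (\<integral>x. sstar_real (preal p1 x) x + sstar_real (preal p2 x) x \<partial>\<mu>)"
  proof (rule integral_mono)
    show "integrable \<mu> (\<lambda>x. sstar_real (preal ?q1 x) x + sstar_real (preal ?q2 x) x)"
      using integrable_sstar_preal[OF q1(1)] integrable_sstar_preal[OF q2(1)] by simp
    show "integrable \<mu> (\<lambda>x. sstar_real (preal p1 x) x + sstar_real (preal p2 x) x)"
      using integrable_sstar_preal[OF p1] integrable_sstar_preal[OF p2] by simp
    fix x assume "x \<in> space \<mu>"
    then have x: "x \<in> \<Omega>" by simp
    have "sstar_real (preal ?q1 x) x \<le> sstar_real (min (preal p1 x) (preal p2 x)) x"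
      "sstar_real (preal ?q2 x) x \<le> sstar_real (max (preal p1 x) (preal p2 x)) x"
      using sstar_real_mono[OF x] q1(2)[OF x] q2(2)[OF x] by auto
    then show "sstar_real (preal ?q1 x) x + sstar_real (preal ?q2 x) x
        \<le> sstar_real (preal p1 x) x + sstar_real (preal p2 x) x"
      by (cases "preal p1 x \<le> preal p2 x") (auto simp: min_def max_def)
  qed
  then show ?thesis
    using integrable_sstar_preal[OF p1] integrable_sstar_preal[OF p2]
      integrable_sstar_preal[OF q1(1)] integrable_sstar_preal[OF q2(1)] by simp
qed

lemma dual_value_min_max:
  "dual_value p1 + dual_value p2 \<le>
    dual_value (cc_env (\<lambda>x. min (p1 x) (p2 x))) + dual_value (cc_env (\<lambda>x. max (p1 x) (p2 x)))"
  using integral_rho_ctreal_min_max integral_sstar_preal_min_max unfolding dual_value_def by simp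

end

context
  fixes q :: "nat \<Rightarrow> 'a \<Rightarrow> ereal" and p :: "'a \<Rightarrow> ereal" and B :: real
  assumes q: "\<And>n. q n \<in> finite_cconcave" and p: "p \<in> finite_cconcave"
    and bd: "\<And>n x. x \<in> closure \<Omega> \<Longrightarrow> \<bar>preal (q n) x\<bar> \<le> B"
    and unif: "\<And>e. 0 < e \<Longrightarrow> \<exists>N. \<forall>n\<ge>N. \<forall>x\<in>\<Omega>. \<bar>preal (q n) x - preal p x\<bar> \<le> e"
begin

lemma preal_bounded_on_domain: "x \<in> \<Omega> \<Longrightarrow> \<bar>preal (q n) x\<bar> \<le> B"
  using bd closure_subset by blast

lemma preal_tendsto: "x \<in> \<Omega> \<Longrightarrow> (\<lambda>n. preal (q n) x) \<longlonglongrightarrow> preal p x"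
  using unif by (rule uniform_imp_LIMSEQ)

lemma ctreal_tendsto:
  assumes "y \<in> \<Omega>" shows "(\<lambda>n. ctreal (q n) y) \<longlonglongrightarrow> ctreal p y"
proof (rule uniform_imp_LIMSEQ[where A="{y}"])
  fix e :: real assume "0 < e"
  then obtain N where "\<forall>n\<ge>N. \<forall>x\<in>\<Omega>. \<bar>preal (q n) x - preal p x\<bar> \<le> e" using unif by blast
  then show "\<exists>N. \<forall>n\<ge>N. \<forall>y\<in>{y}. \<bar>ctreal (q n) y - ctreal p y\<bar> \<le> e"
    using ctreal_diff_le[OF q p closure_subset[THEN subsetD, OF assms]] by blast
qed simp

lemma integral_rho_ctreal_tendsto:
  "(\<lambda>n. \<integral>y. \<rho> y * ctreal (q n) y \<partial>\<mu>) \<longlonglongrightarrow> (\<integral>y. \<rho> y * ctreal p y \<partial>\<mu>)"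
proof (rule integral_dominated_convergence[where w="\<lambda>y. \<bar>\<rho> y\<bar> * (B + cmax)"])
  obtain x0 where x0: "x0 \<in> \<Omega>" using nonempty_domain by blast
  show "(\<lambda>y. \<rho> y * ctreal p y) \<in> borel_measurable \<mu>"
    using measurable_rho measurable_ctreal[OF p] by measurable
  show "(\<lambda>y. \<rho> y * ctreal (q n) y) \<in> borel_measurable \<mu>" for n
    using measurable_rho measurable_ctreal[OF q] by measurable
  show "integrable \<mu> (\<lambda>y. \<bar>\<rho> y\<bar> * (B + cmax))" using integrable_rho by simp
  show "AE y in \<mu>. (\<lambda>n. \<rho> y * ctreal (q n) y) \<longlonglongrightarrow> \<rho> y * ctreal p y"
    by (rule AE_I2) (auto intro!: tendsto_mult ctreal_tendsto)
  show "AE y in \<mu>. norm (\<rho> y * ctreal (q n) y) \<le> \<bar>\<rho> y\<bar> * (B + cmax)" for n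
  proof (rule AE_I2)
    fix y assume "y \<in> space \<mu>"
    then have "\<bar>ctreal (q n) y\<bar> \<le> \<bar>preal (q n) x0\<bar> + cmax"
      using ctreal_bounded[OF q x0 closure_subset[THEN subsetD, of y]] by simp
    then have "\<bar>ctreal (q n) y\<bar> \<le> B + cmax" using preal_bounded_on_domain[OF x0, of n] by simp
    then show "norm (\<rho> y * ctreal (q n) y) \<le> \<bar>\<rho> y\<bar> * (B + cmax)" by (simp add: abs_mult mult_left_mono)
  qed
qed

lemma integral_sstar_preal_tendsto:
  "(\<lambda>n. \<integral>x. sstar_real (preal (q n) x) x \<partial>\<mu>) \<longlonglongrightarrow> (\<integral>x. sstar_real (preal p x) x \<partial>\<mu>)"
proof -
  obtain K where K: "\<And>x t. x \<in> \<Omega> \<Longrightarrow> t \<le> B \<Longrightarrow> \<bar>sstar_real t x\<bar> \<le> K"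
    using sstar_real_bounded by blast
  show ?thesis
  proof (rule integral_dominated_convergence[where w="\<lambda>_. K"])
    show "(\<lambda>x. sstar_real (preal p x) x) \<in> borel_measurable \<mu>"
      by (rule measurable_sstar_real_comp[OF measurable_preal[OF p]])
    show "(\<lambda>x. sstar_real (preal (q n) x) x) \<in> borel_measurable \<mu>" for n
      by (rule measurable_sstar_real_comp[OF measurable_preal[OF q]])
    show "integrable \<mu> (\<lambda>_. K)" by (rule integrable_bounded) auto
    show "AE x in \<mu>. (\<lambda>n. sstar_real (preal (q n) x) x) \<longlonglongrightarrow> sstar_real (preal p x) x"
      by (rule AE_I2) (auto intro: isCont_tendsto_compose[OF isCont_sstar_real preal_tendsto])
    show "AE x in \<mu>. norm (sstar_real (preal (q n) x) x) \<le> K" for n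
      using K preal_bounded_on_domain by (intro AE_I2) (auto simp: abs_le_iff)
  qed
qed

lemma dual_value_tendsto: "(\<lambda>n. dual_value (q n)) \<longlonglongrightarrow> dual_value p"
  unfolding dual_value_def by (rule tendsto_diff[OF integral_rho_ctreal_tendsto integral_sstar_preal_tendsto])

lemma integral_preal_tendsto: "(\<lambda>n. integral\<^sup>L \<mu> (preal (q n))) \<longlonglongrightarrow> integral\<^sup>L \<mu> (preal p)"
proof (rule integral_dominated_convergence[where w="\<lambda>_. B"])
  show "preal p \<in> borel_measurable \<mu>" "preal (q n) \<in> borel_measurable \<mu>" for n
    using measurable_preal p q by auto
  show "integrable \<mu> (\<lambda>_. B)" by (rule integrable_bounded) auto
  show "AE x in \<mu>. (\<lambda>n. preal (q n) x) \<longlonglongrightarrow> preal p x" by (rule AE_I2) (auto intro: preal_tendsto)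
  show "AE x in \<mu>. norm (preal (q n) x) \<le> B" for n using preal_bounded_on_domain by (intro AE_I2) auto
qed

end

lemma finite_cconcave_convergent_subseq:
  fixes ps :: "nat \<Rightarrow> 'a \<Rightarrow> ereal"
  assumes ps: "\<And>n. ps n \<in> finite_cconcave" and bd: "\<And>n x. x \<in> closure \<Omega> \<Longrightarrow> \<bar>preal (ps n) x\<bar> \<le> B"
  obtains r :: "nat \<Rightarrow> nat" and p where "strict_mono r" "p \<in> finite_cconcave"
    "(\<lambda>n. dual_value (ps (r n))) \<longlonglongrightarrow> dual_value p"
    "(\<lambda>n. integral\<^sup>L \<mu> (preal (ps (r n)))) \<longlonglongrightarrow> integral\<^sup>L \<mu> (preal p)"
proof (rule finite_cconcave_uniform_subseq[OF ps bd])
  fix r :: "nat \<Rightarrow> nat" and p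
  assume r: "strict_mono r" and p: "p \<in> finite_cconcave"
    and unif: "\<And>e. 0 < e \<Longrightarrow> \<exists>N. \<forall>n\<ge>N. \<forall>x\<in>\<Omega>. \<bar>preal (ps (r n)) x - preal p x\<bar> \<le> e"
  have bd_r: "\<bar>preal (ps (r n)) x\<bar> \<le> B" if "x \<in> closure \<Omega>" for n x using bd[OF that] .
  show thesis
    using that[OF r p] dual_value_tendsto[of "\<lambda>n. ps (r n)", OF ps p bd_r unif]
      integral_preal_tendsto[of "\<lambda>n. ps (r n)", OF ps p bd_r unif] by blast
qed

definition dual_sup :: real where "dual_sup = Sup (dual_value ` finite_cconcave)"

lemma bdd_above_dual_value: "bdd_above (dual_value ` finite_cconcave)"
  using dual_value_bounded_above by (intro bdd_aboveI[of _ "(b_N + 1 + 2 * cmax) * mass"]) blast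

lemma dual_value_le_dual_sup: "p \<in> finite_cconcave \<Longrightarrow> dual_value p \<le> dual_sup"
  unfolding dual_sup_def by (rule cSup_upper[OF imageI bdd_above_dual_value])

definition dual_maximizers :: "('a \<Rightarrow> ereal) set" where
  "dual_maximizers = {p \<in> finite_cconcave. dual_value p = dual_sup}"

lemma exists_dual_maximizer: "dual_maximizers \<noteq> {}"
proof -
  have "\<exists>p\<in>finite_cconcave. dual_sup - inverse (real (Suc n)) < dual_value p" for n
    using less_cSup_iff[OF _ bdd_above_dual_value, of "dual_sup - inverse (real (Suc n))"]
      cc_env_zero_finite unfolding dual_sup_def by auto
  then obtain ps where ps: "\<And>n. ps n \<in> finite_cconcave"
    "\<And>n. dual_sup - inverse (real (Suc n)) < dual_value (ps n)" by metis
  have "dual_sup - 1 \<le> dual_value (ps n)" for n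
    using ps(2)[of n] inverse_le_1_iff[of "real (Suc n)"] by linarith
  then have bd: "\<bar>preal (ps n) x\<bar> \<le> coercivity_bound (dual_sup - 1)" if "x \<in> closure \<Omega>" for n x
    using preal_le_coercivity_bound[OF ps(1) _ that] by blast
  obtain r :: "nat \<Rightarrow> nat" and p where r: "strict_mono r" and p: "p \<in> finite_cconcave"
    and lim: "(\<lambda>n. dual_value (ps (r n))) \<longlonglongrightarrow> dual_value p"
      "(\<lambda>n. integral\<^sup>L \<mu> (preal (ps (r n)))) \<longlonglongrightarrow> integral\<^sup>L \<mu> (preal p)"
    by (rule finite_cconcave_convergent_subseq[OF ps(1) bd])
  have "\<bar>dual_value (ps n) - dual_sup\<bar> \<le> inverse (real (Suc n))" for n
    using ps(2)[of n] dual_value_le_dual_sup[OF ps(1)] by (simp add: abs_le_iff)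
  from LIMSEQ_subseq_if_abs_diff_le_inverse[OF this r] lim(1) have "dual_value p = dual_sup"
    by (rule LIMSEQ_unique[symmetric])
  then show ?thesis using p unfolding dual_maximizers_def by blast
qed

lemma preal_dual_maximizer_bounded:
  "p \<in> dual_maximizers \<Longrightarrow> x \<in> closure \<Omega> \<Longrightarrow> \<bar>preal p x\<bar> \<le> coercivity_bound dual_sup"
  using preal_le_coercivity_bound unfolding dual_maximizers_def by auto

lemma bdd_below_integral_preal_maximizers:
  "bdd_below ((\<lambda>p. integral\<^sup>L \<mu> (preal p)) ` dual_maximizers)"
proof (rule bdd_belowI2)
  fix p assume p: "p \<in> dual_maximizers"
  show "integral\<^sup>L \<mu> (\<lambda>_. - coercivity_bound dual_sup) \<le> integral\<^sup>L \<mu> (preal p)"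
  proof (rule integral_mono)
    show "integrable \<mu> (\<lambda>_. - coercivity_bound dual_sup)" by (rule integrable_bounded) auto
    show "integrable \<mu> (preal p)" using p integrable_preal unfolding dual_maximizers_def by blast
    show "- coercivity_bound dual_sup \<le> preal p x" if "x \<in> space \<mu>" for x
      using preal_dual_maximizer_bounded[OF p closure_subset[THEN subsetD, of x]] that by simp
  qed
qed

lemma exists_least_integral_maximizer:
  "\<exists>p\<in>dual_maximizers. \<forall>p'\<in>dual_maximizers. integral\<^sup>L \<mu> (preal p) \<le> integral\<^sup>L \<mu> (preal p')"
proof -
  define I where "I = (INF p\<in>dual_maximizers. integral\<^sup>L \<mu> (preal p))"
  have I_le: "I \<le> integral\<^sup>L \<mu> (preal p)" if "p \<in> dual_maximizers" for p
    unfolding I_def using that by (rule cINF_lower[OF bdd_below_integral_preal_maximizers])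
  have "\<exists>p\<in>dual_maximizers. integral\<^sup>L \<mu> (preal p) < I + inverse (real (Suc n))" for n
    using cINF_less_iff[OF exists_dual_maximizer bdd_below_integral_preal_maximizers,
        of "I + inverse (real (Suc n))"]
    unfolding I_def by simp
  then obtain ps where ps: "\<And>n. ps n \<in> dual_maximizers"
    "\<And>n. integral\<^sup>L \<mu> (preal (ps n)) < I + inverse (real (Suc n))" by metis
  then have ps_fin: "ps n \<in> finite_cconcave" and ps_max: "dual_value (ps n) = dual_sup" for n
    unfolding dual_maximizers_def by auto
  obtain r :: "nat \<Rightarrow> nat" and p where r: "strict_mono r" and p: "p \<in> finite_cconcave"
    and lim: "(\<lambda>n. dual_value (ps (r n))) \<longlonglongrightarrow> dual_value p"
      "(\<lambda>n. integral\<^sup>L \<mu> (preal (ps (r n)))) \<longlonglongrightarrow> integral\<^sup>L \<mu> (preal p)"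
    by (rule finite_cconcave_convergent_subseq[OF ps_fin preal_dual_maximizer_bounded[OF ps(1)]])
  have "dual_value p = dual_sup" using lim(1) by (simp add: ps_max LIMSEQ_const_iff)
  then have p_max: "p \<in> dual_maximizers" using p unfolding dual_maximizers_def by blast
  have "\<bar>integral\<^sup>L \<mu> (preal (ps n)) - I\<bar> \<le> inverse (real (Suc n))" for n
    using ps(2)[of n] I_le[OF ps(1)] by (simp add: abs_le_iff)
  from LIMSEQ_subseq_if_abs_diff_le_inverse[OF this r] lim(2) have "integral\<^sup>L \<mu> (preal p) = I"
    by (rule LIMSEQ_unique[symmetric])
  then show ?thesis using p_max I_le by auto
qed

lemma dual_maximizers_cc_env_min:
  assumes p1: "p1 \<in> dual_maximizers" and p2: "p2 \<in> dual_maximizers"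
  shows "cc_env (\<lambda>x. min (p1 x) (p2 x)) \<in> dual_maximizers"
proof -
  have fin: "p1 \<in> finite_cconcave" "p2 \<in> finite_cconcave"
    using p1 p2 unfolding dual_maximizers_def by auto
  note q1 = cc_env_min[OF fin refl] and q2 = cc_env_max[OF fin refl]
  show ?thesis
    using dual_value_min_max[OF fin] p1 p2 dual_value_le_dual_sup[OF q1(1)] dual_value_le_dual_sup[OF q2(1)] q1(1)
    unfolding dual_maximizers_def by auto
qed

lemma least_integral_maximizer_le:
  assumes p: "p \<in> dual_maximizers"
    and least: "\<And>p'. p' \<in> dual_maximizers \<Longrightarrow> integral\<^sup>L \<mu> (preal p) \<le> integral\<^sup>L \<mu> (preal p')"
    and p': "p' \<in> dual_maximizers" and x: "x \<in> \<Omega>"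
  shows "p x \<le> p' x"
proof -
  have fin: "p \<in> finite_cconcave" "p' \<in> finite_cconcave" using p p' unfolding dual_maximizers_def by auto
  define q where "q = cc_env (\<lambda>x. min (p x) (p' x))"
  note q = cc_env_min[OF fin q_def]
  have q_max: "q \<in> dual_maximizers" unfolding q_def by (rule dual_maximizers_cc_env_min[OF p p'])
  define f where "f x = preal p x - preal q x" for x
  have f_int: "integrable \<mu> f" unfolding f_def using integrable_preal fin q(1) by simp
  have f_nonneg: "0 \<le> f x" if "x \<in> \<Omega>" for x using q(2)[OF that] unfolding f_def by simp
  then have f_AE: "AE x in \<mu>. 0 \<le> f x" by (intro AE_I2) simp
  have "integral\<^sup>L \<mu> f \<le> 0"
    using least[OF q_max] integrable_preal fin q(1) unfolding f_def by simp
  moreover have "0 \<le> integral\<^sup>L \<mu> f" using f_AE by (rule integral_nonneg_AE)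
  ultimately have "AE x in \<mu>. f x = 0" using integral_nonneg_eq_0_iff_AE[OF f_int f_AE] by simp
  moreover have "continuous_on \<Omega> f"
    unfolding f_def using continuous_on_preal fin(1) q(1)
    by (intro continuous_intros) (auto intro: continuous_on_subset[OF _ closure_subset])
  ultimately have "f x = 0" using continuous_on_AE_zero_imp_zero[OF open_domain _ _ x] by blast
  then have "preal p x \<le> preal p' x" using q(2)[OF x] unfolding f_def by simp
  then show ?thesis using finite_cconcave_eq_preal[OF fin(1) x] finite_cconcave_eq_preal[OF fin(2) x] by simp
qed

lemma Jstar_le_dual_sup:
  assumes "q \<in> Xstar \<Omega> s" "c_concave \<Omega> c q"
  shows "Jstar \<Omega> s c q \<rho> \<le> ereal dual_sup"
  using assms(2)
proof (cases rule: c_concave_cases)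
  case 1 then show ?thesis using PInf_notin_Xstar assms(1) by blast
next
  case 2 then show ?thesis by (simp add: Jstar_MInf)
next
  case 3 then show ?thesis by (simp add: Jstar_finite_cconcave dual_value_le_dual_sup)
qed

lemma Sigma_max_eq_dual_maximizers: "Sigma_max \<Omega> s c \<rho> = dual_maximizers"
proof
  show "dual_maximizers \<subseteq> Sigma_max \<Omega> s c \<rho>"
    using finite_cconcave_Xstar Jstar_finite_cconcave Jstar_le_dual_sup
    unfolding dual_maximizers_def Sigma_max_def finite_cconcave_def by auto
  show "Sigma_max \<Omega> s c \<rho> \<subseteq> dual_maximizers"
  proof
    fix p assume p: "p \<in> Sigma_max \<Omega> s c \<rho>"
    obtain p0 where p0: "p0 \<in> dual_maximizers" using exists_dual_maximizer by blast
    then have p0_fin: "p0 \<in> finite_cconcave" unfolding dual_maximizers_def by blast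
    have ge: "ereal dual_sup \<le> Jstar \<Omega> s c p \<rho>"
      using p p0 finite_cconcave_Xstar[OF p0_fin] Jstar_finite_cconcave[OF p0_fin]
      unfolding Sigma_max_def dual_maximizers_def finite_cconcave_def by auto
    have "c_concave \<Omega> c p" and X: "p \<in> Xstar \<Omega> s" using p unfolding Sigma_max_def by auto
    then show "p \<in> dual_maximizers"
    proof (cases rule: c_concave_cases)
      case 1 then show ?thesis using PInf_notin_Xstar X by blast
    next
      case 2 then show ?thesis using ge by (simp add: Jstar_MInf)
    next
      case 3 then show ?thesis
        using ge dual_value_le_dual_sup[OF 3] unfolding dual_maximizers_def by (simp add: Jstar_finite_cconcave)
    qed
  qed
qed

end

theorem lemma4p5:
  fixes \<Omega> :: "'a::euclidean_space set"
    and s :: "real \<Rightarrow> 'a \<Rightarrow> ereal"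
    and c :: "'a \<Rightarrow> 'a \<Rightarrow> real"
    and \<rho>bar :: "'a \<Rightarrow> real"
  assumes "bounded_smooth_domain \<Omega>"
    and "admissible_s \<Omega> s"
    and "admissible_cost c"
    and "\<rho>bar \<in> Xspace \<Omega> s"
    and "condN \<Omega> s \<rho>bar"
  shows "\<exists>pstar\<in>Sigma_max \<Omega> s c \<rho>bar.
           (\<forall>p\<in>Sigma_max \<Omega> s c \<rho>bar. \<forall>x\<in>\<Omega>. pstar x \<le> p x) \<and>
           (\<forall>q\<in>Sigma_max \<Omega> s c \<rho>bar.
              (\<forall>p\<in>Sigma_max \<Omega> s c \<rho>bar. \<forall>x\<in>\<Omega>. q x \<le> p x) \<longrightarrow> (\<forall>x\<in>\<Omega>. q x = pstar x))"
proof -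
  interpret dual_problem \<Omega> s c \<rho>bar
    using assms unfolding bounded_smooth_domain_def by unfold_locales auto
  obtain pstar where pstar: "pstar \<in> dual_maximizers"
    "\<And>p. p \<in> dual_maximizers \<Longrightarrow> integral\<^sup>L \<mu> (preal pstar) \<le> integral\<^sup>L \<mu> (preal p)"
    using exists_least_integral_maximizer by blast
  have least: "\<forall>p\<in>dual_maximizers. \<forall>x\<in>\<Omega>. pstar x \<le> p x"
    using least_integral_maximizer_le[OF pstar] by blast
  have "\<forall>x\<in>\<Omega>. q x = pstar x" if "q \<in> dual_maximizers" "\<forall>p\<in>dual_maximizers. \<forall>x\<in>\<Omega>. q x \<le> p x" for q
    using that least pstar(1) by (meson order_antisym)
  then show ?thesis
    unfolding Sigma_max_eq_dual_maximizers using pstar(1) least by blast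
qed

end
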